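(* Let $\mathcal{A}$ and $\mathcal{B}$ be Boolean algebras. Then the Fremlin (Archimedean Riesz space) tensor product $\mathcal{C}(\mathcal{A})\bar{\otimes}\mathcal{C}(\mathcal{B})$ is Riesz isomorphic to $\mathcal{C}(\mathcal{A}\otimes\mathcal{B})$, where $\mathcal{A}\otimes\mathcal{B}$ denotes the free product of $\mathcal{A}$ and $\mathcal{B}$.
   Context: Place functions: for a Riesz space $E$ and $e\in E^+$, $x\in E^+$ is a component of $e$ if $x\wedge(e-x)=0$; the set $\mathcal{C}(e)$ of components is a Boolean algebra. For a Boolean algebra $\mathcal{A}$ there is an Archimedean Riesz space $E$ with strong unit $e$ and a Boolean isomorphism $\chi\colon\mathcal{A}\to\mathcal{C}(e)$ such that $E$ is the linear span of $\mathcal{C}(e)$; this is unique up to isomorphism and $E$ is denoted $\mathcal{C}(\mathcal{A})$ (Carathéodory space of place functions). Free product: if $Z_1,Z_2$ are the Stone spaces of $\mathcal{A},\mathcal{B}$ (nonzero ring homomorphisms to $\mathbb{Z}_2$, with $a\mapsto\hat a=\{z: z(a)=1\}$ the Stone representation), then $\mathcal{A}\otimes\mathcal{B}$ is the Boolean algebra of clopen subsets of $Z_1\times Z_2$ (product topology), with canonical Boolean homomorphisms $\epsilon_A(a)=\hat a\times Z_2$, $\epsilon_B(b)=Z_1\times\hat b$. Fremlin tensor product: for Archimedean Riesz spaces $E,F$, $E\bar{\otimes}F$ is the Archimedean Riesz space $G$ together with a Riesz bimorphism $\otimes\colon E\times F\to G$ such that for every Archimedean Riesz space $H$ and Riesz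 bimorphism $\psi\colon E\times F\to H$ there is a unique Riesz homomorphism $T\colon G\to H$ with $T\circ\otimes=\psi$. *)

theory Defs
  imports "HOL-Analysis.Analysis"
begin

class riesz_space = ordered_real_vector + lattice

class archimedean_riesz_space = riesz_space +
  assumes archimedean: "0 \<le> x \<Longrightarrow> (\<And>n::nat. real n *\<^sub>R x \<le> y) \<Longrightarrow> x = 0"

definition strong_unit :: "'a::riesz_space \<Rightarrow> bool" where
  "strong_unit e \<longleftrightarrow> 0 \<le> e \<and> (\<forall>x. \<exists>c::real. sup x (- x) \<le> c *\<^sub>R e)"

definition components :: "'a::riesz_space \<Rightarrow> 'a set" where
  "components e = {x. 0 \<le> x \<and> inf x (e - x) = 0}"

definition riesz_hom :: "('a::riesz_space \<Rightarrow> 'b::riesz_space) \<Rightarrow> bool" where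
  "riesz_hom T \<longleftrightarrow> linear T \<and> (\<forall>x y. T (sup x y) = sup (T x) (T y))
                  \<and> (\<forall>x y. T (inf x y) = inf (T x) (T y))"

definition riesz_iso :: "('a::riesz_space \<Rightarrow> 'b::riesz_space) \<Rightarrow> bool" where
  "riesz_iso T \<longleftrightarrow> riesz_hom T \<and> bij T"

definition riesz_bimorphism ::
    "('a::riesz_space \<Rightarrow> 'b::riesz_space \<Rightarrow> 'c::riesz_space) \<Rightarrow> bool" where
  "riesz_bimorphism \<psi> \<longleftrightarrow> (\<forall>x. linear (\<psi> x)) \<and> (\<forall>y. linear (\<lambda>x. \<psi> x y))
     \<and> (\<forall>x. 0 \<le> x \<longrightarrow> riesz_hom (\<psi> x)) \<and> (\<forall>y. 0 \<le> y \<longrightarrow> riesz_hom (\<lambda>x. \<psi> x y))"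

text \<open>The universal property of the Fremlin tensor product (G, tp) of E and F, tested against
  all Archimedean Riesz spaces H whose carrier is the type 'h.\<close>
definition fremlin_universal ::
    "'h::archimedean_riesz_space itself \<Rightarrow>
     ('e::archimedean_riesz_space \<Rightarrow> 'f::archimedean_riesz_space \<Rightarrow> 'g::archimedean_riesz_space)
     \<Rightarrow> bool" where
  "fremlin_universal (_::'h itself) tp \<longleftrightarrow>
     (\<forall>\<psi> :: 'e \<Rightarrow> 'f \<Rightarrow> 'h. riesz_bimorphism \<psi> \<longrightarrow>
        (\<exists>!T :: 'g \<Rightarrow> 'h. riesz_hom T \<and> (\<forall>x y. T (tp x y) = \<psi> x y)))"

definition bool_iso ::
    "'b set \<Rightarrow> ('b \<Rightarrow> 'b \<Rightarrow> 'b) \<Rightarrow> ('b \<Rightarrow> 'b \<Rightarrow> 'b) \<Rightarrow> ('b \<Rightarrow> 'b) \<Rightarrow> 'b \<Rightarrow> 'b \<Rightarrow>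
     'c set \<Rightarrow> ('c \<Rightarrow> 'c \<Rightarrow> 'c) \<Rightarrow> ('c \<Rightarrow> 'c \<Rightarrow> 'c) \<Rightarrow> ('c \<Rightarrow> 'c) \<Rightarrow> 'c \<Rightarrow> 'c \<Rightarrow>
     ('b \<Rightarrow> 'c) \<Rightarrow> bool" where
  "bool_iso A jA mA cA zA oA C jC mC cC zC oC chi \<longleftrightarrow>
     bij_betw chi A C
     \<and> (\<forall>a\<in>A. \<forall>b\<in>A. chi (jA a b) = jC (chi a) (chi b) \<and> chi (mA a b) = mC (chi a) (chi b))
     \<and> (\<forall>a\<in>A. chi (cA a) = cC (chi a)) \<and> chi zA = zC \<and> chi oA = oC"

text \<open>The Archimedean Riesz space of type 'e is (a copy of) the Caratheodory space C(A) of place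
  functions of the Boolean algebra A = (carrier, join, meet, complement, 0, 1): it has a strong unit e
  and a Boolean isomorphism from A onto the components C(e), and it is the linear span of C(e).\<close>
definition is_caratheodory_space ::
    "'e::archimedean_riesz_space itself \<Rightarrow>
     'b set \<Rightarrow> ('b \<Rightarrow> 'b \<Rightarrow> 'b) \<Rightarrow> ('b \<Rightarrow> 'b \<Rightarrow> 'b) \<Rightarrow> ('b \<Rightarrow> 'b) \<Rightarrow> 'b \<Rightarrow> 'b \<Rightarrow> bool" where
  "is_caratheodory_space (_::'e itself) A jA mA cA zA oA \<longleftrightarrow>
     (\<exists>(e::'e) chi. strong_unit e
        \<and> bool_iso A jA mA cA zA oA (components e) sup inf (\<lambda>x. e - x) 0 e chi
        \<and> span (components e) = UNIV)"

abbreviation is_caratheodory_space_of_type ::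
    "'e::archimedean_riesz_space itself \<Rightarrow> 'a::boolean_algebra itself \<Rightarrow> bool" where
  "is_caratheodory_space_of_type E (_::'a itself) \<equiv>
     is_caratheodory_space E (UNIV::'a set) sup inf uminus bot top"

text \<open>Stone space: nonzero ring homomorphisms to Z_2 (ring product = meet,
  ring sum = symmetric difference; Z_2 represented by bool with sum = xor, product = and).\<close>
definition stone_space :: "('a::boolean_algebra \<Rightarrow> bool) set" where
  "stone_space = {z. (\<forall>a b. z (inf a b) = (z a \<and> z b))
                    \<and> (\<forall>a b. z (sup (inf a (- b)) (inf (- a) b)) = (z a \<noteq> z b))
                    \<and> (\<exists>a. z a)}"

definition stone_hat :: "'a::boolean_algebra \<Rightarrow> ('a \<Rightarrow> bool) set" where
  "stone_hat a = {z \<in> stone_space. z a}"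

definition stone_topology :: "('a::boolean_algebra \<Rightarrow> bool) topology" where
  "stone_topology = subtopology (topology_generated_by (range stone_hat)) stone_space"

definition free_prod_topology ::
    "('a::boolean_algebra itself) \<Rightarrow> ('b::boolean_algebra itself) \<Rightarrow>
     (('a \<Rightarrow> bool) \<times> ('b \<Rightarrow> bool)) topology" where
  "free_prod_topology _ _ = prod_topology stone_topology stone_topology"

definition free_product ::
    "('a::boolean_algebra itself) \<Rightarrow> ('b::boolean_algebra itself) \<Rightarrow>
     (('a \<Rightarrow> bool) \<times> ('b \<Rightarrow> bool)) set set" where
  "free_product A B = {S. openin (free_prod_topology A B) S \<and> closedin (free_prod_topology A B) S}"

definition is_caratheodory_space_of_free_product ::
    "'h::archimedean_riesz_space itself \<Rightarrow> 'a::boolean_algebra itself \<Rightarrow> 'b::boolean_algebra itself \<Rightarrow> bool" where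
  "is_caratheodory_space_of_free_product H A B \<longleftrightarrow>
     is_caratheodory_space H (free_product A B) (\<union>) (\<inter>)
       (\<lambda>S. topspace (free_prod_topology A B) - S) {} (topspace (free_prod_topology A B))"

end

theory Submission
  imports Defs "HOL-Library.Lattice_Algebras"
begin

text \<open>The space C(A) is spanned by the components \<chi> a, and finitely many of them are
  combinations of the pairwise disjoint components \<chi> c of the atoms c of the finite subalgebra
  they generate. Hence a finitely additive map on A that respects disjointness extends to a Riesz
  homomorphism on C(A), and a map on rectangles a \<times> b with these properties in each variable
  extends to a Riesz bimorphism on C(A) \<times> C(B). Every clopen subset of Z_1 \<times> Z_2 is a finite
  union of clopen rectangles (compactness, via the prime ideal theorem), so the place functions
  \<chi>(hat a \<times> hat b) span C(A \<otimes> B). They define a Riesz bimorphism \<phi> into C(A \<otimes> B), hence a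
  Riesz homomorphism T on the Fremlin tensor product with T (x \<otimes> y) = \<phi> x y; conversely the
  tensors \<chi> a \<otimes> \<chi> b define a Riesz homomorphism S with S (\<chi>(hat a \<times> hat b)) = \<chi> a \<otimes> \<chi> b.
  S \<circ> T fixes every x \<otimes> y, so it is the identity by the uniqueness in the universal property,
  and T \<circ> S fixes the spanning rectangles.\<close>

section \<open>Riesz spaces\<close>

instance riesz_space \<subseteq> lattice_ab_group_add ..

definition riesz_abs :: "'a::riesz_space \<Rightarrow> 'a" where
  "riesz_abs x = sup x (- x)"

lemma scaleR_sup:
  fixes x y :: "'a::riesz_space"
  assumes "0 \<le> c"
  shows "c *\<^sub>R sup x y = sup (c *\<^sub>R x) (c *\<^sub>R y)"
proof (cases "c = 0")
  case True
  then show ?thesis by simp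
next
  case False
  with assms have c: "c > 0" by simp
  have "sup x y \<le> inverse c *\<^sub>R sup (c *\<^sub>R x) (c *\<^sub>R y)"
  proof (rule sup_least)
    have "x = inverse c *\<^sub>R (c *\<^sub>R x)" using c by simp
    also have "\<dots> \<le> inverse c *\<^sub>R sup (c *\<^sub>R x) (c *\<^sub>R y)"
      using c by (intro scaleR_left_mono) auto
    finally show "x \<le> inverse c *\<^sub>R sup (c *\<^sub>R x) (c *\<^sub>R y)" .
    have "y = inverse c *\<^sub>R (c *\<^sub>R y)" using c by simp
    also have "\<dots> \<le> inverse c *\<^sub>R sup (c *\<^sub>R x) (c *\<^sub>R y)"
      using c by (intro scaleR_left_mono) auto
    finally show "y \<le> inverse c *\<^sub>R sup (c *\<^sub>R x) (c *\<^sub>R y)" .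
  qed
  then have "c *\<^sub>R sup x y \<le> c *\<^sub>R (inverse c *\<^sub>R sup (c *\<^sub>R x) (c *\<^sub>R y))"
    using c by (intro scaleR_left_mono) auto
  then have "c *\<^sub>R sup x y \<le> sup (c *\<^sub>R x) (c *\<^sub>R y)"
    using c by simp
  moreover have "sup (c *\<^sub>R x) (c *\<^sub>R y) \<le> c *\<^sub>R sup x y"
    using assms by (intro sup_least scaleR_left_mono) auto
  ultimately show ?thesis by (rule antisym)
qed

lemma scaleR_inf:
  fixes x y :: "'a::riesz_space"
  assumes "0 \<le> c"
  shows "c *\<^sub>R inf x y = inf (c *\<^sub>R x) (c *\<^sub>R y)"
proof -
  have "c *\<^sub>R inf x y = - sup (- (c *\<^sub>R x)) (- (c *\<^sub>R y))"
    using scaleR_sup[OF assms, of "- x" "- y"] by (simp only: inf_eq_neg_sup scaleR_minus_right)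
  then show ?thesis by (simp only: inf_eq_neg_sup[symmetric])
qed

lemma sup_eq_riesz_abs:
  fixes x y :: "'a::riesz_space"
  shows "sup x y = (1/2::real) *\<^sub>R (x + y + riesz_abs (x - y))"
proof -
  have "x + y + riesz_abs (x - y) = sup (x + y + (x - y)) (x + y + (y - x))"
    unfolding riesz_abs_def by (simp add: add_sup_distrib_left)
  also have "\<dots> = sup ((2::real) *\<^sub>R x) ((2::real) *\<^sub>R y)"
    by (simp add: scaleR_2 algebra_simps)
  also have "\<dots> = (2::real) *\<^sub>R sup x y"
    by (simp add: scaleR_sup)
  finally show ?thesis by simp
qed

lemma inf_eq_add_diff_sup:
  fixes x y :: "'a::riesz_space"
  shows "inf x y = x + y - sup x y"
  using add_eq_inf_sup[of x y] by (metis add_diff_cancel_left')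

lemma riesz_homI:
  assumes lin: "linear T" and abs: "\<And>x. T (riesz_abs x) = riesz_abs (T x)"
  shows "riesz_hom T"
proof -
  have sup: "T (sup x y) = sup (T x) (T y)" for x y
    unfolding sup_eq_riesz_abs
    by (simp only: linear_add[OF lin] linear_scale[OF lin] linear_diff[OF lin] abs)
  have "T (inf x y) = inf (T x) (T y)" for x y
    by (simp only: inf_eq_add_diff_sup sup linear_add[OF lin] linear_diff[OF lin])
  with lin sup show ?thesis
    unfolding riesz_hom_def by blast
qed

lemma riesz_hom_linear: "riesz_hom T \<Longrightarrow> linear T"
  by (simp add: riesz_hom_def)

lemma riesz_hom_inf: "riesz_hom T \<Longrightarrow> T (inf x y) = inf (T x) (T y)"
  by (simp add: riesz_hom_def)

lemma riesz_hom_mono: "riesz_hom T \<Longrightarrow> x \<le> y \<Longrightarrow> T x \<le> T y"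
  by (metis riesz_hom_def sup.absorb_iff2)

lemma riesz_hom_nonneg: "riesz_hom T \<Longrightarrow> 0 \<le> x \<Longrightarrow> 0 \<le> T x"
  using riesz_hom_mono[of T 0 x] linear_0[OF riesz_hom_linear] by metis

lemma riesz_hom_le_scaleR: "riesz_hom T \<Longrightarrow> x \<le> c *\<^sub>R y \<Longrightarrow> T x \<le> c *\<^sub>R T y"
  using riesz_hom_mono[of T x "c *\<^sub>R y"] linear_scale[OF riesz_hom_linear, of T c y] by simp

lemma riesz_hom_comp: "riesz_hom S \<Longrightarrow> riesz_hom T \<Longrightarrow> riesz_hom (S \<circ> T)"
  unfolding riesz_hom_def by (auto intro: linear_compose)

lemma riesz_hom_id: "riesz_hom id"
  unfolding riesz_hom_def by (simp add: linear_id)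

lemma riesz_bimorphism_linear_left: "riesz_bimorphism \<psi> \<Longrightarrow> linear (\<lambda>x. \<psi> x y)"
  by (simp add: riesz_bimorphism_def)

lemma riesz_bimorphism_linear_right: "riesz_bimorphism \<psi> \<Longrightarrow> linear (\<psi> x)"
  by (simp add: riesz_bimorphism_def)

lemma riesz_bimorphism_hom_left: "riesz_bimorphism \<psi> \<Longrightarrow> 0 \<le> y \<Longrightarrow> riesz_hom (\<lambda>x. \<psi> x y)"
  by (simp add: riesz_bimorphism_def)

lemma riesz_bimorphism_hom_right: "riesz_bimorphism \<psi> \<Longrightarrow> 0 \<le> x \<Longrightarrow> riesz_hom (\<psi> x)"
  by (simp add: riesz_bimorphism_def)

lemma riesz_bimorphism_nonneg: "riesz_bimorphism \<psi> \<Longrightarrow> 0 \<le> x \<Longrightarrow> 0 \<le> y \<Longrightarrow> 0 \<le> \<psi> x y"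
  using riesz_hom_nonneg riesz_bimorphism_hom_right by blast

lemma inf_eq_0_le_scaleR:
  fixes u v p q :: "'a::riesz_space"
  assumes "0 \<le> u" "u \<le> c *\<^sub>R p" "0 \<le> v" "v \<le> c *\<^sub>R q" "inf p q = 0" "0 \<le> c"
  shows "inf u v = 0"
proof (rule antisym)
  have "inf u v \<le> inf (c *\<^sub>R p) (c *\<^sub>R q)"
    using assms by (intro inf_mono)
  also have "\<dots> = 0"
    using assms(5,6) by (simp add: scaleR_inf[symmetric])
  finally show "inf u v \<le> 0" .
qed (use assms in simp)

lemma inf_add_le_add_inf:
  fixes u v w :: "'a::riesz_space"
  assumes "0 \<le> u" "0 \<le> v" "0 \<le> w"
  shows "inf (u + v) w \<le> inf u w + inf v w"
proof -
  have "inf u w + inf v w = inf (inf (u + v) (u + w)) (inf (w + v) (w + w))"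
    by (simp only: add_inf_distrib_right add_inf_distrib_left inf_aci add.commute)
  moreover have "inf (u + v) w \<le> inf (inf (u + v) (u + w)) (inf (w + v) (w + w))"
    using assms by (intro le_infI) (auto intro: le_infI2 add_increasing add_increasing2)
  ultimately show ?thesis by simp
qed

lemma inf_sum_eq_0:
  fixes u :: "'k \<Rightarrow> 'a::riesz_space"
  assumes "finite A" "\<And>i. i \<in> A \<Longrightarrow> 0 \<le> u i" "\<And>i. i \<in> A \<Longrightarrow> inf (u i) w = 0" "0 \<le> w"
  shows "inf (\<Sum>i\<in>A. u i) w = 0"
  using assms
proof (induction A rule: finite_induct)
  case empty
  then show ?case by (simp add: inf_absorb1)
next
  case (insert i A)
  have "inf (u i + (\<Sum>i\<in>A. u i)) w \<le> inf (u i) w + inf (\<Sum>i\<in>A. u i) w"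
    using insert by (intro inf_add_le_add_inf sum_nonneg) auto
  also have "\<dots> = 0" using insert by simp
  finally have "inf (u i + (\<Sum>i\<in>A. u i)) w \<le> 0" .
  moreover have "0 \<le> inf (u i + (\<Sum>i\<in>A. u i)) w"
    using insert by (auto intro!: add_nonneg_nonneg sum_nonneg)
  ultimately show ?case using insert by (simp add: antisym)
qed

lemma inf_sum_sum_eq_0:
  fixes u :: "'k \<Rightarrow> 'a::riesz_space" and v :: "'l \<Rightarrow> 'a"
  assumes A: "finite A" "\<And>i. i \<in> A \<Longrightarrow> 0 \<le> u i"
    and B: "finite B" "\<And>j. j \<in> B \<Longrightarrow> 0 \<le> v j"
    and disjoint: "\<And>i j. i \<in> A \<Longrightarrow> j \<in> B \<Longrightarrow> inf (u i) (v j) = 0"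
  shows "inf (\<Sum>i\<in>A. u i) (\<Sum>j\<in>B. v j) = 0"
proof (rule inf_sum_eq_0[OF A])
  fix i assume i: "i \<in> A"
  have "inf (\<Sum>j\<in>B. v j) (u i) = 0"
    using A(2)[OF i] disjoint[OF i] by (intro inf_sum_eq_0[OF B]) (simp_all add: inf_commute)
  then show "inf (u i) (\<Sum>j\<in>B. v j) = 0"
    by (simp add: inf_commute)
qed (use B in \<open>auto intro: sum_nonneg\<close>)

lemma riesz_abs_diff_disjoint:
  fixes p n :: "'a::riesz_space"
  assumes "0 \<le> p" "0 \<le> n" "inf p n = 0"
  shows "riesz_abs (p - n) = p + n"
proof -
  have "riesz_abs (p - n) + (p + n) = sup ((p - n) + (p + n)) ((n - p) + (p + n))"
    unfolding riesz_abs_def by (simp add: add_sup_distrib_right)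
  also have "\<dots> = sup ((2::real) *\<^sub>R p) ((2::real) *\<^sub>R n)"
    by (simp add: scaleR_2 algebra_simps)
  also have "\<dots> = (2::real) *\<^sub>R sup p n"
    by (simp add: scaleR_sup)
  also have "sup p n = p + n"
    using add_eq_inf_sup[of p n] assms by simp
  finally show ?thesis by (simp add: scaleR_2)
qed

lemma inf_scaleR_eq_0:
  fixes u v :: "'a::riesz_space"
  assumes "0 \<le> u" "0 \<le> v" "inf u v = 0" "0 \<le> a" "0 \<le> b"
  shows "inf (a *\<^sub>R u) (b *\<^sub>R v) = 0"
proof (rule inf_eq_0_le_scaleR)
  show "a *\<^sub>R u \<le> max a b *\<^sub>R u" "b *\<^sub>R v \<le> max a b *\<^sub>R v"
    using assms by (auto intro: scaleR_right_mono)
qed (use assms in \<open>simp_all add: scaleR_nonneg_nonneg\<close>)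

definition positive_disjoint_on :: "'k set \<Rightarrow> ('k \<Rightarrow> 'a::riesz_space) \<Rightarrow> bool" where
  "positive_disjoint_on C u \<longleftrightarrow>
     (\<forall>k\<in>C. 0 \<le> u k) \<and> (\<forall>k\<in>C. \<forall>k'\<in>C. k \<noteq> k' \<longrightarrow> inf (u k) (u k') = 0)"

lemma riesz_abs_sum_disjoint:
  fixes u :: "'k \<Rightarrow> 'a::riesz_space"
  assumes fin: "finite C" and disj: "positive_disjoint_on C u"
  shows "riesz_abs (\<Sum>k\<in>C. c k *\<^sub>R u k) = (\<Sum>k\<in>C. \<bar>c k\<bar> *\<^sub>R u k)"
proof -
  define A where "A = {k\<in>C. 0 \<le> c k}"
  define B where "B = {k\<in>C. c k < 0}"
  have AB: "finite A" "finite B" "A \<inter> B = {}" "C = A \<union> B"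
    using fin by (auto simp: A_def B_def)
  have pos: "0 \<le> u k" if "k \<in> C" for k
    using disj that unfolding positive_disjoint_on_def by auto
  have A_nonneg: "0 \<le> c k *\<^sub>R u k" if "k \<in> A" for k
    using that pos by (auto simp: A_def scaleR_nonneg_nonneg)
  have B_nonneg: "0 \<le> (- c k) *\<^sub>R u k" if "k \<in> B" for k
    by (rule scaleR_nonneg_nonneg) (use that pos in \<open>auto simp: B_def\<close>)
  define p where "p = (\<Sum>k\<in>A. c k *\<^sub>R u k)"
  define n where "n = (\<Sum>k\<in>B. (- c k) *\<^sub>R u k)"
  have p_nonneg: "0 \<le> p" and n_nonneg: "0 \<le> n"
    unfolding p_def n_def using A_nonneg B_nonneg by (auto intro: sum_nonneg)
  have split: "(\<Sum>k\<in>C. h k) = (\<Sum>k\<in>A. h k) + (\<Sum>k\<in>B. h k)" for h :: "'k \<Rightarrow> 'a"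
    using AB by (simp add: sum.union_disjoint)
  have "inf p n = 0"
    unfolding p_def n_def
  proof (rule inf_sum_sum_eq_0[OF AB(1) A_nonneg AB(2) B_nonneg])
    fix i j assume i: "i \<in> A" and j: "j \<in> B"
    then have "i \<in> C" "j \<in> C" "i \<noteq> j"
      using AB by auto
    then have "inf (u i) (u j) = 0"
      using disj unfolding positive_disjoint_on_def by blast
    moreover have "0 \<le> c i" "0 \<le> - c j"
      using i j by (auto simp: A_def B_def)
    ultimately show "inf (c i *\<^sub>R u i) ((- c j) *\<^sub>R u j) = 0"
      using pos \<open>i \<in> C\<close> \<open>j \<in> C\<close> by (intro inf_scaleR_eq_0) auto
  qed
  then have "riesz_abs (p - n) = p + n"
    by (rule riesz_abs_diff_disjoint[OF p_nonneg n_nonneg])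
  moreover have "(\<Sum>k\<in>C. c k *\<^sub>R u k) = p - n"
    unfolding split p_def n_def by (simp add: sum_negf)
  moreover have "(\<Sum>k\<in>C. \<bar>c k\<bar> *\<^sub>R u k) = p + n"
    unfolding split p_def n_def by (intro arg_cong2[where f="(+)"] sum.cong) (auto simp: A_def B_def)
  ultimately show ?thesis by simp
qed

section \<open>Cells of a finite family in a Boolean algebra\<close>

text \<open>For bs of the same length as ss, cell ss bs is the atom of the subalgebra generated by ss
  lying below s_i or - s_i according as bs_i holds or not (possibly bot).\<close>

fun cell :: "'c::boolean_algebra list \<Rightarrow> bool list \<Rightarrow> 'c" where
  "cell (s # ss) (b # bs) = inf (if b then s else - s) (cell ss bs)"
| "cell _ _ = top"

definition sign_vectors :: "nat \<Rightarrow> bool list set" where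
  "sign_vectors n = {bs. length bs = n}"

lemma finite_sign_vectors [simp]: "finite (sign_vectors n)"
  using finite_lists_length_eq[of "UNIV::bool set" n] by (simp add: sign_vectors_def)

lemma sum_sign_vectors_Suc:
  "(\<Sum>bs\<in>sign_vectors (Suc n). f bs) = (\<Sum>bs\<in>sign_vectors n. f (True # bs) + f (False # bs))"
proof -
  have "sign_vectors (Suc n) = Cons True ` sign_vectors n \<union> Cons False ` sign_vectors n"
    unfolding sign_vectors_def by (auto simp: length_Suc_conv)
  then have "(\<Sum>bs\<in>sign_vectors (Suc n). f bs)
      = (\<Sum>bs\<in>Cons True ` sign_vectors n. f bs) + (\<Sum>bs\<in>Cons False ` sign_vectors n. f bs)"
    by (simp only:) (rule sum.union_disjoint; auto)
  then show ?thesis by (simp add: sum.reindex sum.distrib)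
qed

lemma cell_inf_cases:
  assumes "s \<in> set ss" "length bs = length ss"
  shows "inf (cell ss bs) s = cell ss bs \<or> inf (cell ss bs) s = bot"
  using assms
proof (induction ss arbitrary: bs)
  case Nil
  then show ?case by simp
next
  case (Cons t ts)
  then obtain b cs where bs: "bs = b # cs" "length cs = length ts"
    by (cases bs) auto
  show ?case
  proof (cases "s = t")
    case True
    then show ?thesis using bs by (cases b) (auto simp: inf_aci)
  next
    case False
    with Cons bs have "inf (cell ts cs) s = cell ts cs \<or> inf (cell ts cs) s = bot"
      by simp
    moreover have "inf (cell (t # ts) (b # cs)) s = inf (if b then t else - t) (inf (cell ts cs) s)"
      by (simp add: inf_aci)
    ultimately show ?thesis using bs by auto
  qed
qed

lemma cell_disjoint:
  assumes "length bs = length ss" "length cs = length ss" "bs \<noteq> cs"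
  shows "inf (cell ss bs) (cell ss cs) = bot"
  using assms
proof (induction ss arbitrary: bs cs)
  case Nil
  then show ?case by simp
next
  case (Cons t ts)
  then obtain b bs' c cs' where bs: "bs = b # bs'" "cs = c # cs'"
    and lengths: "length bs' = length ts" "length cs' = length ts"
    by (cases bs; cases cs) auto
  show ?case
  proof (cases "b = c")
    case True
    with Cons bs lengths have "inf (cell ts bs') (cell ts cs') = bot" by auto
    then show ?thesis using bs by (simp add: inf_aci)
  next
    case False
    then show ?thesis using bs by (cases b; cases c) (auto simp: inf_aci)
  qed
qed

definition finitely_additive :: "('c::boolean_algebra \<Rightarrow> 'v::ab_group_add) \<Rightarrow> bool" where
  "finitely_additive \<mu> \<longleftrightarrow> (\<forall>x y. inf x y = bot \<longrightarrow> \<mu> (sup x y) = \<mu> x + \<mu> y)"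

lemma finitely_additiveD: "finitely_additive \<mu> \<Longrightarrow> inf x y = bot \<Longrightarrow> \<mu> (sup x y) = \<mu> x + \<mu> y"
  by (simp add: finitely_additive_def)

lemma finitely_additive_bot: "finitely_additive \<mu> \<Longrightarrow> \<mu> bot = 0"
  unfolding finitely_additive_def by (metis add_cancel_right_right inf_bot_left sup_bot_left)

lemma finitely_additive_compose:
  assumes "finitely_additive \<mu>" "linear T"
  shows "finitely_additive (\<lambda>a. T (\<mu> a))"
  using assms by (simp add: finitely_additive_def linear_add)

lemma finitely_additive_sum_cells:
  assumes "finitely_additive \<mu>"
  shows "(\<Sum>bs\<in>sign_vectors (length ss). \<mu> (inf (cell ss bs) b)) = \<mu> b"
proof (induction ss arbitrary: b)
  case Nil
  have "sign_vectors 0 = {[]}" by (auto simp: sign_vectors_def)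
  then show ?case by simp
next
  case (Cons s ss)
  have split: "\<mu> b = \<mu> (inf s b) + \<mu> (inf (- s) b)"
  proof -
    have "b = sup (inf s b) (inf (- s) b)"
      by (simp add: inf_sup_distrib2[symmetric])
    moreover have "inf (inf s b) (inf (- s) b) = bot"
      by (simp add: inf_aci)
    ultimately show ?thesis
      using finitely_additiveD[OF assms] by metis
  qed
  have "(\<Sum>bs\<in>sign_vectors (length (s # ss)). \<mu> (inf (cell (s # ss) bs) b))
      = (\<Sum>bs\<in>sign_vectors (length ss). \<mu> (inf (cell ss bs) (inf s b)) + \<mu> (inf (cell ss bs) (inf (- s) b)))"
    by (simp add: sum_sign_vectors_Suc inf_aci)
  also have "\<dots> = \<mu> b"
    by (simp add: sum.distrib Cons.IH split)
  finally show ?case .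
qed

definition cell_coeff :: "'c::boolean_algebra list \<Rightarrow> 'c \<Rightarrow> bool list \<Rightarrow> real" where
  "cell_coeff ss s bs = (if inf (cell ss bs) s = cell ss bs then 1 else 0)"

definition expansion_on ::
    "'r set \<Rightarrow> ('r \<Rightarrow> 'v::real_vector) \<Rightarrow> 'k set \<Rightarrow> ('r \<Rightarrow> 'k \<Rightarrow> real) \<Rightarrow> ('k \<Rightarrow> 'v) \<Rightarrow> bool" where
  "expansion_on F \<rho> C M u \<longleftrightarrow> finite C \<and> (\<forall>r\<in>F. \<rho> r = (\<Sum>k\<in>C. M r k *\<^sub>R u k))"

lemma expansion_on_subset: "expansion_on F \<rho> C M u \<Longrightarrow> G \<subseteq> F \<Longrightarrow> expansion_on G \<rho> C M u"
  by (auto simp: expansion_on_def)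

lemma finitely_additive_cell_expansion:
  fixes \<mu> :: "'c::boolean_algebra \<Rightarrow> 'v::real_vector"
  assumes "finitely_additive \<mu>"
  shows "expansion_on (set ss) \<mu> (sign_vectors (length ss)) (cell_coeff ss) (\<lambda>bs. \<mu> (cell ss bs))"
  unfolding expansion_on_def
proof (intro conjI ballI finite_sign_vectors)
  fix s assume s: "s \<in> set ss"
  have "\<mu> s = (\<Sum>bs\<in>sign_vectors (length ss). \<mu> (inf (cell ss bs) s))"
    using finitely_additive_sum_cells[OF assms] by simp
  also have "\<dots> = (\<Sum>bs\<in>sign_vectors (length ss). cell_coeff ss s bs *\<^sub>R \<mu> (cell ss bs))"
  proof (rule sum.cong[OF refl])
    fix bs assume "bs \<in> sign_vectors (length ss)"
    then have "length bs = length ss" by (simp add: sign_vectors_def)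
    from cell_inf_cases[OF s this]
    show "\<mu> (inf (cell ss bs) s) = cell_coeff ss s bs *\<^sub>R \<mu> (cell ss bs)"
      using finitely_additive_bot[OF assms] by (auto simp: cell_coeff_def)
  qed
  finally show "\<mu> s = (\<Sum>bs\<in>sign_vectors (length ss). cell_coeff ss s bs *\<^sub>R \<mu> (cell ss bs))" .
qed

lemma finitely_additive2_cell_expansion:
  fixes \<nu> :: "'a::boolean_algebra \<Rightarrow> 'b::boolean_algebra \<Rightarrow> 'v::real_vector"
  assumes left: "\<And>b. finitely_additive (\<lambda>a. \<nu> a b)" and right: "\<And>a. finitely_additive (\<nu> a)"
  shows "expansion_on (set ss \<times> set ts) (case_prod \<nu>)
           (sign_vectors (length ss) \<times> sign_vectors (length ts))
           (\<lambda>r k. cell_coeff ss (fst r) (fst k) * cell_coeff ts (snd r) (snd k))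
           (\<lambda>k. \<nu> (cell ss (fst k)) (cell ts (snd k)))"
  unfolding expansion_on_def
proof (intro conjI ballI)
  show "finite (sign_vectors (length ss) \<times> sign_vectors (length ts))" by simp
  fix r assume "r \<in> set ss \<times> set ts"
  then obtain a b where r: "r = (a, b)" "a \<in> set ss" "b \<in> set ts" by auto
  have expand: "\<mu> x = (\<Sum>k\<in>sign_vectors (length xs). cell_coeff xs x k *\<^sub>R \<mu> (cell xs k))"
    if "finitely_additive \<mu>" "x \<in> set xs" for \<mu> :: "'c::boolean_algebra \<Rightarrow> 'v" and x xs
    using finitely_additive_cell_expansion[OF that(1)] that(2) by (simp add: expansion_on_def)
  have "\<nu> a b = (\<Sum>k1\<in>sign_vectors (length ss). cell_coeff ss a k1 *\<^sub>R \<nu> (cell ss k1) b)"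
    by (rule expand[OF left r(2)])
  also have "\<dots> = (\<Sum>k1\<in>sign_vectors (length ss). cell_coeff ss a k1 *\<^sub>R
                 (\<Sum>k2\<in>sign_vectors (length ts). cell_coeff ts b k2 *\<^sub>R \<nu> (cell ss k1) (cell ts k2)))"
    by (simp only: expand[OF right r(3)])
  also have "\<dots> = (\<Sum>k\<in>sign_vectors (length ss) \<times> sign_vectors (length ts).
                  (cell_coeff ss a (fst k) * cell_coeff ts b (snd k)) *\<^sub>R \<nu> (cell ss (fst k)) (cell ts (snd k)))"
    by (simp add: scaleR_sum_right sum.cartesian_product case_prod_beta)
  finally show "case_prod \<nu> r = (\<Sum>k\<in>sign_vectors (length ss) \<times> sign_vectors (length ts).
      (cell_coeff ss (fst r) (fst k) * cell_coeff ts (snd r) (snd k)) *\<^sub>R \<nu> (cell ss (fst k)) (cell ts (snd k)))"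
    using r by simp
qed

section \<open>Linear maps prescribed on a spanning family\<close>

lemma span_range_sum:
  fixes \<rho> :: "'r \<Rightarrow> 'v::real_vector"
  assumes "x \<in> span (range \<rho>)"
  obtains F f where "finite F" "x = (\<Sum>r\<in>F. f r *\<^sub>R \<rho> r)"
proof -
  have "\<exists>F f. finite F \<and> x = (\<Sum>r\<in>F. f r *\<^sub>R \<rho> r)"
    using assms
  proof (induction rule: span_induct_alt)
    case base
    show ?case by (intro exI[of _ "{}"]) auto
  next
    case (step c y z)
    then obtain r F f where r: "y = \<rho> r" and F: "finite F" "z = (\<Sum>r\<in>F. f r *\<^sub>R \<rho> r)"
      by auto
    define g where "g q = (if q = r then c else 0) + (if q \<in> F then f q else 0)" for q
    have "(\<Sum>q\<in>insert r F. g q *\<^sub>R \<rho> q)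
        = (\<Sum>q\<in>insert r F. if q = r then c *\<^sub>R \<rho> q else 0)
          + (\<Sum>q\<in>insert r F. if q \<in> F then f q *\<^sub>R \<rho> q else 0)"
      unfolding g_def by (simp add: scaleR_add_left sum.distrib if_distrib[of "\<lambda>a. a *\<^sub>R _"] cong: if_cong)
    also have "\<dots> = c *\<^sub>R y + z"
      using F r by (simp add: sum.inter_restrict[symmetric] Int_absorb1 subset_insertI)
    finally show ?case
      using F by (intro exI[of _ "insert r F"] exI[of _ g]) auto
  qed
  then show ?thesis using that by blast
qed

lemma sum_union_combination:
  fixes \<tau> :: "'r \<Rightarrow> 'z::real_vector"
  assumes "finite F" "finite G"
  shows "(\<Sum>r\<in>F \<union> G. ((if r \<in> F then f r else 0) + (if r \<in> G then g r else 0)) *\<^sub>R \<tau> r)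
       = (\<Sum>r\<in>F. f r *\<^sub>R \<tau> r) + (\<Sum>r\<in>G. g r *\<^sub>R \<tau> r)"
proof -
  have restrict: "(\<Sum>r\<in>F \<union> G. (if r \<in> A then h r else 0) *\<^sub>R \<tau> r) = (\<Sum>r\<in>A. h r *\<^sub>R \<tau> r)"
    if "A \<subseteq> F \<union> G" for A h
    using assms that sum.inter_restrict[of "F \<union> G" "\<lambda>r. h r *\<^sub>R \<tau> r" A]
    by (simp add: Int_absorb1 if_distrib[of "\<lambda>c. c *\<^sub>R _"] cong: if_cong)
  show ?thesis
    unfolding scaleR_add_left sum.distrib by (simp add: restrict)
qed

lemma relations_transfer_to_equalities:
  fixes \<rho> :: "'r \<Rightarrow> 'v::real_vector" and \<sigma> :: "'r \<Rightarrow> 'w::real_vector"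
  assumes relations: "\<And>F f. finite F \<Longrightarrow> (\<Sum>r\<in>F. f r *\<^sub>R \<rho> r) = 0 \<Longrightarrow> (\<Sum>r\<in>F. f r *\<^sub>R \<sigma> r) = 0"
    and F: "finite F" and G: "finite G" and eq: "(\<Sum>r\<in>F. f r *\<^sub>R \<rho> r) = (\<Sum>r\<in>G. g r *\<^sub>R \<rho> r)"
  shows "(\<Sum>r\<in>F. f r *\<^sub>R \<sigma> r) = (\<Sum>r\<in>G. g r *\<^sub>R \<sigma> r)"
proof -
  define h where "h r = (if r \<in> F then f r else 0) + (if r \<in> G then - g r else 0)" for r
  have diff: "(\<Sum>r\<in>F \<union> G. h r *\<^sub>R \<tau> r) = (\<Sum>r\<in>F. f r *\<^sub>R \<tau> r) - (\<Sum>r\<in>G. g r *\<^sub>R \<tau> r)"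
    for \<tau> :: "'r \<Rightarrow> 'z::real_vector"
    unfolding h_def sum_union_combination[OF F G] by (simp add: sum_negf)
  have "(\<Sum>r\<in>F \<union> G. h r *\<^sub>R \<sigma> r) = 0"
    using relations[of "F \<union> G" h] diff[of \<rho>] F G eq by simp
  then show ?thesis
    using diff[of \<sigma>] by simp
qed

lemma linear_extension_exists:
  fixes \<rho> :: "'r \<Rightarrow> 'v::real_vector" and \<sigma> :: "'r \<Rightarrow> 'w::real_vector"
  assumes span: "span (range \<rho>) = UNIV"
    and relations: "\<And>F f. finite F \<Longrightarrow> (\<Sum>r\<in>F. f r *\<^sub>R \<rho> r) = 0 \<Longrightarrow> (\<Sum>r\<in>F. f r *\<^sub>R \<sigma> r) = 0"
  shows "\<exists>S. linear S \<and> (\<forall>r. S (\<rho> r) = \<sigma> r)"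
proof -
  have "\<exists>p. finite (fst p) \<and> x = (\<Sum>r\<in>fst p. snd p r *\<^sub>R \<rho> r)" for x
    using span_range_sum[of x \<rho>] span by (metis UNIV_I fst_conv snd_conv)
  then obtain rep where rep: "\<And>x. finite (fst (rep x)) \<and> x = (\<Sum>r\<in>fst (rep x). snd (rep x) r *\<^sub>R \<rho> r)"
    by metis
  define S where "S x = (\<Sum>r\<in>fst (rep x). snd (rep x) r *\<^sub>R \<sigma> r)" for x
  have S: "S x = (\<Sum>r\<in>F. f r *\<^sub>R \<sigma> r)" if "finite F" "x = (\<Sum>r\<in>F. f r *\<^sub>R \<rho> r)" for x F f
    unfolding S_def by (rule relations_transfer_to_equalities[OF relations]) (use rep[of x] that in auto)
  have "linear S"
  proof (rule linearI)
    fix x y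
    obtain F f G g where F: "finite F" "x = (\<Sum>r\<in>F. f r *\<^sub>R \<rho> r)"
      and G: "finite G" "y = (\<Sum>r\<in>G. g r *\<^sub>R \<rho> r)"
      using rep[of x] rep[of y] by blast
    define h where "h r = (if r \<in> F then f r else 0) + (if r \<in> G then g r else 0)" for r
    have "x + y = (\<Sum>r\<in>F \<union> G. h r *\<^sub>R \<rho> r)"
      unfolding h_def sum_union_combination[OF F(1) G(1)] F G ..
    then have "S (x + y) = (\<Sum>r\<in>F \<union> G. h r *\<^sub>R \<sigma> r)"
      using F(1) G(1) by (intro S) auto
    then show "S (x + y) = S x + S y"
      unfolding h_def sum_union_combination[OF F(1) G(1)] S[OF F] S[OF G] .
  next
    fix c x
    obtain F f where F: "finite F" "x = (\<Sum>r\<in>F. f r *\<^sub>R \<rho> r)"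
      using rep[of x] by blast
    then have "c *\<^sub>R x = (\<Sum>r\<in>F. (c * f r) *\<^sub>R \<rho> r)"
      by (simp add: scaleR_sum_right)
    then show "S (c *\<^sub>R x) = c *\<^sub>R S x"
      using S[OF F(1)] S[OF F] by (simp add: scaleR_sum_right)
  qed
  moreover have "S (\<rho> r) = \<sigma> r" for r
    using S[of "{r}" "\<rho> r" "\<lambda>_. 1"] by simp
  ultimately show ?thesis by blast
qed

lemma sum_expansion:
  assumes "expansion_on F \<rho> C M u" "finite F"
  shows "(\<Sum>r\<in>F. f r *\<^sub>R \<rho> r) = (\<Sum>k\<in>C. (\<Sum>r\<in>F. f r * M r k) *\<^sub>R u k)"
proof -
  have "(\<Sum>r\<in>F. f r *\<^sub>R \<rho> r) = (\<Sum>r\<in>F. \<Sum>k\<in>C. (f r * M r k) *\<^sub>R u k)"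
    using assms(1) by (simp add: expansion_on_def scaleR_sum_right)
  also have "\<dots> = (\<Sum>k\<in>C. (\<Sum>r\<in>F. f r * M r k) *\<^sub>R u k)"
    by (subst sum.swap) (simp add: scaleR_sum_left)
  finally show ?thesis .
qed

text \<open>Over a positive disjoint family the modulus of a combination is the combination of the
  moduli, so a vanishing combination has vanishing coefficients wherever the family is nonzero.\<close>

lemma expansion_transfers_relation:
  fixes u :: "'k \<Rightarrow> 'v::riesz_space"
  assumes F: "finite F"
    and \<rho>: "expansion_on F \<rho> C M u" and \<sigma>: "expansion_on F \<sigma> C M v"
    and disj: "positive_disjoint_on C u" and uv: "\<And>k. k \<in> C \<Longrightarrow> u k = 0 \<Longrightarrow> v k = 0"
    and rel: "(\<Sum>r\<in>F. f r *\<^sub>R \<rho> r) = 0"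
  shows "(\<Sum>r\<in>F. f r *\<^sub>R \<sigma> r) = 0"
proof -
  define c where "c k = (\<Sum>r\<in>F. f r * M r k)" for k
  have C: "finite C"
    using \<rho> by (simp add: expansion_on_def)
  have "(\<Sum>k\<in>C. c k *\<^sub>R u k) = 0"
    using rel sum_expansion[OF \<rho> F] by (simp add: c_def)
  then have "(\<Sum>k\<in>C. \<bar>c k\<bar> *\<^sub>R u k) = 0"
    using riesz_abs_sum_disjoint[OF C disj, of c] by (simp add: riesz_abs_def)
  then have "\<forall>k\<in>C. \<bar>c k\<bar> *\<^sub>R u k = 0"
    using C disj
    by (subst sum_nonneg_eq_0_iff[symmetric]) (auto simp: positive_disjoint_on_def intro: scaleR_nonneg_nonneg)
  then have "\<forall>k\<in>C. c k *\<^sub>R v k = 0"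
    using uv by auto
  then have "(\<Sum>k\<in>C. c k *\<^sub>R v k) = 0"
    by (rule sum.neutral)
  then show ?thesis
    using sum_expansion[OF \<sigma> F] by (simp add: c_def)
qed

lemma linear_extension_by_expansions:
  fixes \<rho> :: "'r \<Rightarrow> 'v::riesz_space" and \<sigma> :: "'r \<Rightarrow> 'w::real_vector"
  assumes span: "span (range \<rho>) = UNIV"
    and expansions: "\<And>F. finite F \<Longrightarrow> \<exists>(C::'k set) M u v.
          expansion_on F \<rho> C M u \<and> expansion_on F \<sigma> C M v
          \<and> positive_disjoint_on C u \<and> (\<forall>k\<in>C. u k = 0 \<longrightarrow> v k = 0)"
  shows "\<exists>S. linear S \<and> (\<forall>r. S (\<rho> r) = \<sigma> r)"
proof (rule linear_extension_exists[OF span])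
  fix F f
  assume F: "finite F" and rel: "(\<Sum>r\<in>F. f r *\<^sub>R \<rho> r) = 0"
  from expansions[OF F] obtain C M u v where
    "expansion_on F \<rho> C M u" "expansion_on F \<sigma> C M v"
    "positive_disjoint_on (C::'k set) u" "\<forall>k\<in>C. u k = 0 \<longrightarrow> v k = 0"
    by blast
  then show "(\<Sum>r\<in>F. f r *\<^sub>R \<sigma> r) = 0"
    using expansion_transfers_relation[OF F _ _ _ _ rel] by blast
qed

lemma riesz_homI_by_expansions:
  fixes S :: "'v::riesz_space \<Rightarrow> 'w::riesz_space" and \<rho> :: "'r \<Rightarrow> 'v"
  assumes lin: "linear S" and span: "span (range \<rho>) = UNIV"
    and expansions: "\<And>F. finite F \<Longrightarrow> \<exists>(C::'k set) M u.
          expansion_on F \<rho> C M u \<and> positive_disjoint_on C u \<and> positive_disjoint_on C (\<lambda>k. S (u k))"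
  shows "riesz_hom S"
proof (rule riesz_homI[OF lin])
  fix x
  obtain F f where F: "finite F" "x = (\<Sum>r\<in>F. f r *\<^sub>R \<rho> r)"
    using span_range_sum[of x \<rho>] span by auto
  obtain C M u where \<rho>: "expansion_on F \<rho> (C::'k set) M u"
    and u: "positive_disjoint_on C u" and Su: "positive_disjoint_on C (\<lambda>k. S (u k))"
    using expansions[OF F(1)] by blast
  define c where "c k = (\<Sum>r\<in>F. f r * M r k)" for k
  have C: "finite C"
    using \<rho> by (simp add: expansion_on_def)
  have x: "x = (\<Sum>k\<in>C. c k *\<^sub>R u k)"
    using F sum_expansion[OF \<rho> F(1)] by (simp add: c_def)
  have "S (riesz_abs x) = (\<Sum>k\<in>C. \<bar>c k\<bar> *\<^sub>R S (u k))"
    unfolding x riesz_abs_sum_disjoint[OF C u] by (simp add: linear_sum[OF lin] linear_scale[OF lin])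
  also have "\<dots> = riesz_abs (\<Sum>k\<in>C. c k *\<^sub>R S (u k))"
    by (rule riesz_abs_sum_disjoint[OF C Su, symmetric])
  also have "(\<Sum>k\<in>C. c k *\<^sub>R S (u k)) = S x"
    unfolding x by (simp add: linear_sum[OF lin] linear_scale[OF lin])
  finally show "S (riesz_abs x) = riesz_abs (S x)" .
qed

section \<open>The Stone space of a Boolean algebra\<close>

lemma stone_space_inf: "z \<in> stone_space \<Longrightarrow> z (inf a b) = (z a \<and> z b)"
  by (simp add: stone_space_def)

lemma stone_space_top: "z \<in> stone_space \<Longrightarrow> z top"
proof -
  assume z: "z \<in> stone_space"
  then obtain a where "z a" by (auto simp: stone_space_def)
  with stone_space_inf[OF z, of a top] show ?thesis by simp
qed

lemma stone_space_compl: "z \<in> stone_space \<Longrightarrow> z (- a) = (\<not> z a)"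
proof -
  assume z: "z \<in> stone_space"
  then have "z (sup (inf top (- a)) (inf (- top) a)) = (z top \<noteq> z a)"
    by (simp only: stone_space_def mem_Collect_eq)
  then show ?thesis using stone_space_top[OF z] by simp
qed

lemma stone_space_sup: "z \<in> stone_space \<Longrightarrow> z (sup a b) = (z a \<or> z b)"
proof -
  assume z: "z \<in> stone_space"
  have "sup a b = - inf (- a) (- b)" by simp
  then show ?thesis using stone_space_compl[OF z] stone_space_inf[OF z] by metis
qed

lemma stone_space_bot: "z \<in> stone_space \<Longrightarrow> \<not> z bot"
  using stone_space_compl[of z top] stone_space_top[of z] by simp

lemma stone_hat_inf: "stone_hat (inf a b) = stone_hat a \<inter> stone_hat b"
  by (auto simp: stone_hat_def stone_space_inf)

lemma stone_hat_sup: "stone_hat (sup a b) = stone_hat a \<union> stone_hat b"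
  by (auto simp: stone_hat_def stone_space_sup)

lemma stone_hat_compl: "stone_hat (- a) = stone_space - stone_hat a"
  by (auto simp: stone_hat_def stone_space_compl)

lemma stone_hat_bot [simp]: "stone_hat bot = {}"
  by (auto simp: stone_hat_def stone_space_bot)

lemma stone_hat_top [simp]: "stone_hat top = stone_space"
  by (auto simp: stone_hat_def stone_space_top)

lemma stone_hat_subset: "stone_hat a \<subseteq> stone_space"
  by (auto simp: stone_hat_def)

definition join_list :: "'a::boolean_algebra list \<Rightarrow> 'a" where
  "join_list xs = foldr sup xs bot"

lemma join_list_simps [simp]: "join_list [] = bot" "join_list (x # xs) = sup x (join_list xs)"
  by (simp_all add: join_list_def)

lemma join_list_append: "join_list (xs @ ys) = sup (join_list xs) (join_list ys)"
  by (induction xs) (auto simp: sup_aci)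

lemma join_list_le_sup_filter: "join_list ys \<le> sup x (join_list (filter (\<lambda>y. y \<noteq> x) ys))"
  by (induction ys) (auto intro: le_supI2 sup.coboundedI1 sup.coboundedI2 le_supI1 simp: sup.absorb_iff2 sup_aci)

lemma stone_hat_join_list: "stone_hat (join_list xs) = (\<Union>x\<in>set xs. stone_hat x)"
  by (induction xs) (auto simp: stone_hat_sup)

lemma inf_sup_compl_le: "inf (sup x u) (sup (- x) v) \<le> sup u (v::'a::boolean_algebra)"
proof -
  have "inf (sup x u) (sup (- x) v) = sup (inf x v) (sup (inf u (- x)) (inf u v))"
    by (simp add: inf_sup_distrib1 inf_sup_distrib2 inf_aci sup_aci)
  also have "\<dots> \<le> sup u v"
    by (intro sup_least) (auto intro: le_supI1 le_supI2)
  finally show ?thesis .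
qed

text \<open>The prime ideal theorem: by Zorn's lemma a set not covering a extends to a maximal one,
  whose complement is the set where a point of the Stone space is true.\<close>

definition not_covering :: "'a::boolean_algebra \<Rightarrow> 'a set \<Rightarrow> bool" where
  "not_covering a J \<longleftrightarrow> (\<forall>xs. set xs \<subseteq> J \<longrightarrow> \<not> a \<le> join_list xs)"

lemma maximal_not_covering_exists:
  assumes "not_covering a J"
  obtains M where "J \<subseteq> M" "not_covering a M" "\<And>X. M \<subseteq> X \<Longrightarrow> not_covering a X \<Longrightarrow> X = M"
proof -
  define \<A> where "\<A> = {I. J \<subseteq> I \<and> not_covering a I}"
  have "\<exists>M\<in>\<A>. \<forall>X\<in>\<A>. M \<subseteq> X \<longrightarrow> X = M"
  proof (rule Zorn_Lemma2, intro ballI)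
    fix C assume C: "C \<in> chains \<A>"
    show "\<exists>U\<in>\<A>. \<forall>X\<in>C. X \<subseteq> U"
    proof (cases "C = {}")
      case True
      then show ?thesis using assms by (intro bexI[of _ J]) (auto simp: \<A>_def)
    next
      case False
      have "\<Union>C \<in> \<A>"
        unfolding \<A>_def not_covering_def
      proof (safe)
        fix x assume "x \<in> J"
        then show "x \<in> \<Union>C" using False C by (auto simp: chains_def \<A>_def)
      next
        fix xs assume xs: "set xs \<subseteq> \<Union>C" "a \<le> join_list xs"
        obtain B where "B \<in> C" "set xs \<subseteq> B"
        proof (rule finite_subset_Union_chain[of "set xs" C \<A>])
          show "subset.chain \<A> C" using C by (simp add: chains_alt_def)
        qed (use xs False in auto)
        then show False
          using xs C by (auto simp: chains_def \<A>_def not_covering_def)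
      qed
      then show ?thesis by blast
    qed
  qed
  then show ?thesis
    using that by (auto simp: \<A>_def)
qed

lemma stone_spaceI:
  assumes "z top" "\<And>x. z (- x) = (\<not> z x)" "\<And>x y. z (inf x y) = (z x \<and> z y)"
  shows "z \<in> stone_space"
proof -
  have z_sup: "z (sup x y) = (z x \<or> z y)" for x y
  proof -
    have "sup x y = - inf (- x) (- y)" by simp
    then show ?thesis using assms(2,3) by metis
  qed
  then have "z (sup (inf x (- y)) (inf (- x) y)) = (z x \<noteq> z y)" for x y
    by (auto simp: assms(2,3))
  then show ?thesis
    unfolding stone_space_def using assms by auto
qed

lemma maximal_not_covering_mem_or_compl:
  assumes cover: "not_covering a M"
    and maximal: "\<And>X. M \<subseteq> X \<Longrightarrow> not_covering a X \<Longrightarrow> X = M"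
  shows "x \<in> M \<or> - x \<in> M"
proof -
  have grow: "\<exists>xs. set xs \<subseteq> M \<and> a \<le> sup x (join_list xs)" if "x \<notin> M" for x
  proof -
    have "\<not> not_covering a (insert x M)"
      using maximal[of "insert x M"] that by auto
    then obtain ys where ys: "set ys \<subseteq> insert x M" "a \<le> join_list ys"
      by (auto simp: not_covering_def)
    then have "a \<le> sup x (join_list (filter (\<lambda>y. y \<noteq> x) ys))"
      using join_list_le_sup_filter order_trans by blast
    moreover have "set (filter (\<lambda>y. y \<noteq> x) ys) \<subseteq> M"
      using ys by auto
    ultimately show ?thesis by blast
  qed
  show ?thesis
  proof (rule ccontr)
    assume "\<not> (x \<in> M \<or> - x \<in> M)"
    then obtain xs ys where xs: "set xs \<subseteq> M" "a \<le> sup x (join_list xs)"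
      and ys: "set ys \<subseteq> M" "a \<le> sup (- x) (join_list ys)"
      using grow by blast
    have "inf (sup x (join_list xs)) (sup (- x) (join_list ys)) \<le> join_list (xs @ ys)"
      unfolding join_list_append by (rule inf_sup_compl_le)
    then have "a \<le> join_list (xs @ ys)"
      using xs(2) ys(2) by (meson le_infI order_trans)
    then show False
      using cover xs(1) ys(1) by (auto simp: not_covering_def)
  qed
qed

lemma stone_space_of_complete_not_covering:
  assumes cover: "not_covering a M" and complete: "\<And>x. x \<in> M \<or> - x \<in> M"
  shows "(\<lambda>x. x \<notin> M) \<in> stone_space"
proof (rule stone_spaceI)
  have no_top: "join_list xs \<noteq> top" if "set xs \<subseteq> M" for xs
    using cover that by (auto simp: not_covering_def)
  have down_closed: "y \<in> M" if "x \<in> M" "y \<le> x" for x y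
  proof (rule ccontr)
    assume "y \<notin> M"
    then have "- y \<in> M" using complete by blast
    moreover have "top \<le> sup x (- y)"
      using sup_mono[OF that(2) order_refl, of "- y"] by simp
    ultimately show False
      using no_top[of "[x, - y]"] that(1) by (simp add: top_unique)
  qed
  have sup_closed: "sup x y \<in> M" if "x \<in> M" "y \<in> M" for x y
  proof (rule ccontr)
    assume "sup x y \<notin> M"
    then have "- sup x y \<in> M" using complete by blast
    moreover have "join_list [x, y, - sup x y] = top"
      by (simp only: join_list_simps sup_bot_right sup_assoc[symmetric] sup_compl_top)
    ultimately show False
      using no_top[of "[x, y, - sup x y]"] that by auto
  qed
  show compl: "(- x \<notin> M) = (\<not> x \<notin> M)" for x
    using complete[of x] no_top[of "[x, - x]"] by auto
  show "(inf x y \<notin> M) = (x \<notin> M \<and> y \<notin> M)" for x y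
    using compl down_closed[of "- inf x y" "- x"] down_closed[of "- inf x y" "- y"] sup_closed[of "- x" "- y"]
    by (metis compl_inf double_compl inf_le1 inf_le2 compl_mono)
  show "top \<notin> M"
    using no_top[of "[top]"] by auto
qed

lemma stone_space_point_exists:
  assumes "not_covering a J"
  obtains z where "z \<in> stone_space" "z a" "\<And>j. j \<in> J \<Longrightarrow> \<not> z j"
proof -
  obtain M where M: "J \<subseteq> M" "not_covering a M" "\<And>X. M \<subseteq> X \<Longrightarrow> not_covering a X \<Longrightarrow> X = M"
    using maximal_not_covering_exists[OF assms] by blast
  have "a \<notin> M"
    using M(2) by (auto simp: not_covering_def dest: spec[of _ "[a]"])
  then show ?thesis
    using that[of "\<lambda>x. x \<notin> M"] M(1)
      stone_space_of_complete_not_covering[OF M(2) maximal_not_covering_mem_or_compl[OF M(2,3)]]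
    by blast
qed

lemma stone_hat_eq_empty_iff: "stone_hat a = {} \<longleftrightarrow> a = bot"
proof
  assume "stone_hat a = {}"
  show "a = bot"
  proof (rule ccontr)
    assume "a \<noteq> bot"
    then have "not_covering a {}"
      by (auto simp: not_covering_def bot_unique)
    then obtain z where "z \<in> stone_space" "z a"
      by (rule stone_space_point_exists)
    then show False
      using \<open>stone_hat a = {}\<close> by (auto simp: stone_hat_def)
  qed
qed simp

lemma stone_space_finite_subcover:
  assumes "stone_space \<subseteq> (\<Union>j\<in>J. stone_hat j)"
  obtains xs where "set xs \<subseteq> J" "stone_space \<subseteq> (\<Union>j\<in>set xs. stone_hat j)"
proof (rule ccontr)
  assume no_subcover: "\<not> thesis"
  have "not_covering top J"
    unfolding not_covering_def
  proof (intro allI impI notI)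
    fix xs assume xs: "set xs \<subseteq> J" "top \<le> join_list xs"
    then have "stone_space \<subseteq> (\<Union>j\<in>set xs. stone_hat j)"
      using stone_hat_join_list[of xs] by (simp add: top_unique)
    with xs(1) no_subcover that show False by blast
  qed
  then obtain z where "z \<in> stone_space" "\<And>j. j \<in> J \<Longrightarrow> \<not> z j"
    by (rule stone_space_point_exists) auto
  then show False
    using assms by (auto simp: stone_hat_def)
qed

lemma topspace_stone_topology [simp]:
  "topspace (stone_topology :: ('a::boolean_algebra \<Rightarrow> bool) topology) = stone_space"
proof -
  have "\<Union> (range stone_hat) = (stone_space :: ('a \<Rightarrow> bool) set)"
    using stone_hat_subset stone_hat_top by blast
  then show ?thesis
    unfolding stone_topology_def by simp
qed

lemma openin_stone_hat: "openin stone_topology (stone_hat a)"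
  unfolding stone_topology_def openin_subtopology
  by (intro exI[of _ "stone_hat a"]) (auto intro: topology_generated_by_Basis simp: stone_hat_def)

lemma closedin_stone_hat: "closedin stone_topology (stone_hat a)"
proof -
  have "topspace stone_topology - stone_hat a = stone_hat (- a)"
    by (simp add: stone_hat_compl)
  then show ?thesis
    unfolding closedin_def using openin_stone_hat[of "- a"] stone_hat_subset[of a] by simp
qed

lemma openin_stone_topology_basis:
  assumes "openin stone_topology U" "z \<in> U"
  obtains a where "z \<in> stone_hat a" "stone_hat a \<subseteq> U"
proof -
  obtain T where T: "generate_topology_on (range stone_hat) T" "U = T \<inter> stone_space"
    using assms(1) unfolding stone_topology_def openin_subtopology openin_topology_generated_by_iff
    by blast
  have "\<forall>z\<in>T \<inter> stone_space. \<exists>a. z \<in> stone_hat a \<and> stone_hat a \<subseteq> T"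
    using T(1)
  proof (induction rule: generate_topology_on.induct)
    case (Int a b)
    show ?case
    proof
      fix z assume "z \<in> a \<inter> b \<inter> stone_space"
      then obtain x y where "z \<in> stone_hat x" "stone_hat x \<subseteq> a" "z \<in> stone_hat y" "stone_hat y \<subseteq> b"
        using Int.IH by blast
      then show "\<exists>c. z \<in> stone_hat c \<and> stone_hat c \<subseteq> a \<inter> b"
        by (intro exI[of _ "inf x y"]) (auto simp: stone_hat_inf)
    qed
  next
    case (UN K)
    then show ?case by blast
  qed auto
  then show ?thesis
    using that T(2) assms(2) stone_hat_subset by blast
qed

lemma compact_space_stone_topology:
  "compact_space (stone_topology :: ('a::boolean_algebra \<Rightarrow> bool) topology)"
  unfolding compact_space_alt
proof (intro allI impI)
  fix \<U> :: "('a \<Rightarrow> bool) set set"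
  assume \<U>: "(\<forall>U\<in>\<U>. openin stone_topology U) \<and> topspace stone_topology \<subseteq> \<Union>\<U>"
  define J where "J = {a. \<exists>U\<in>\<U>. stone_hat a \<subseteq> U}"
  have "stone_space \<subseteq> (\<Union>j\<in>J. stone_hat j)"
  proof
    fix z :: "'a \<Rightarrow> bool" assume "z \<in> stone_space"
    then obtain U where U: "U \<in> \<U>" "z \<in> U" using \<U> by auto
    moreover have "openin stone_topology U"
      using U(1) \<U> by blast
    ultimately obtain a where "z \<in> stone_hat a" "stone_hat a \<subseteq> U"
      using openin_stone_topology_basis by blast
    then show "z \<in> (\<Union>j\<in>J. stone_hat j)" using U by (auto simp: J_def)
  qed
  then obtain xs where xs: "set xs \<subseteq> J" "stone_space \<subseteq> (\<Union>j\<in>set xs. stone_hat j)"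
    by (rule stone_space_finite_subcover)
  define choice where "choice j = (SOME U. U \<in> \<U> \<and> stone_hat j \<subseteq> U)" for j
  have choice: "choice j \<in> \<U> \<and> stone_hat j \<subseteq> choice j" if "j \<in> J" for j
    unfolding choice_def by (rule someI_ex) (use that in \<open>auto simp: J_def\<close>)
  show "\<exists>\<F>. finite \<F> \<and> \<F> \<subseteq> \<U> \<and> topspace stone_topology \<subseteq> \<Union>\<F>"
  proof (intro exI[of _ "choice ` set xs"] conjI)
    show "choice ` set xs \<subseteq> \<U>"
      using choice xs(1) by auto
    show "topspace stone_topology \<subseteq> \<Union> (choice ` set xs)"
      using choice xs by fastforce
  qed simp
qed

lemma compact_space_free_prod_topology:
  "compact_space (free_prod_topology TYPE('a::boolean_algebra) TYPE('b::boolean_algebra))"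
  unfolding free_prod_topology_def compact_space_prod_topology
  using compact_space_stone_topology[where 'a='a] compact_space_stone_topology[where 'a='b] by blast

lemma stone_rectangle_in_free_product:
  "stone_hat (a::'a::boolean_algebra) \<times> stone_hat (b::'b::boolean_algebra) \<in> free_product TYPE('a) TYPE('b)"
  unfolding free_product_def free_prod_topology_def
  by (simp add: openin_prod_Times_iff closedin_prod_Times_iff openin_stone_hat closedin_stone_hat)

lemma free_product_Un:
  fixes A :: "'a::boolean_algebra itself" and B :: "'b::boolean_algebra itself"
  shows "W \<in> free_product A B \<Longrightarrow> W' \<in> free_product A B \<Longrightarrow> W \<union> W' \<in> free_product A B"
  unfolding free_product_def by (auto intro: openin_Un closedin_Un)

lemma union_rectangles_in_free_product:
  "(\<Union>(a, b)\<in>set rs. stone_hat a \<times> stone_hat b) \<in> free_product TYPE('a::boolean_algebra) TYPE('b::boolean_algebra)"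
proof (induction rs)
  case Nil
  then show ?case
    using stone_rectangle_in_free_product[of "bot::'a" "bot::'b"] by simp
next
  case (Cons r rs)
  then show ?case
    using free_product_Un[OF stone_rectangle_in_free_product[of "fst r" "snd r"]]
    by (simp add: case_prod_beta)
qed

lemma stone_rectangle_Int:
  "(stone_hat a \<times> stone_hat b) \<inter> (stone_hat a' \<times> stone_hat b') = stone_hat (inf a a') \<times> stone_hat (inf b b')"
  by (auto simp: stone_hat_inf)

lemma openin_free_prod_topology_rectangle:
  fixes W :: "(('a::boolean_algebra \<Rightarrow> bool) \<times> ('b::boolean_algebra \<Rightarrow> bool)) set"
  assumes "openin (free_prod_topology TYPE('a) TYPE('b)) W" "(x, y) \<in> W"
  obtains a b where "(x, y) \<in> stone_hat a \<times> stone_hat b" "stone_hat a \<times> stone_hat b \<subseteq> W"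
proof -
  have "\<exists>U V. openin stone_topology U \<and> openin stone_topology V \<and> x \<in> U \<and> y \<in> V \<and> U \<times> V \<subseteq> W"
    using assms unfolding free_prod_topology_def openin_prod_topology_alt by simp
  then obtain U V where UV: "openin stone_topology U" "openin stone_topology V"
    "x \<in> U" "y \<in> V" "U \<times> V \<subseteq> W"
    by blast
  obtain a where a: "x \<in> stone_hat a" "stone_hat a \<subseteq> U"
    using openin_stone_topology_basis[OF UV(1,3)] .
  obtain b where b: "y \<in> stone_hat b" "stone_hat b \<subseteq> V"
    using openin_stone_topology_basis[OF UV(2,4)] .
  show ?thesis
    using that a b UV(5) by blast
qed

lemma finite_union_stone_rectangles:
  fixes \<F> :: "(('a::boolean_algebra \<Rightarrow> bool) \<times> ('b::boolean_algebra \<Rightarrow> bool)) set set"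
  assumes "finite \<F>" "\<And>R. R \<in> \<F> \<Longrightarrow> \<exists>a b. R = stone_hat a \<times> stone_hat b"
  shows "\<exists>rs :: ('a \<times> 'b) list. \<Union>\<F> = (\<Union>(a, b)\<in>set rs. stone_hat a \<times> stone_hat b)"
  using assms
proof (induction rule: finite_induct)
  case empty
  show ?case
    by (rule exI[of _ "[]"]) simp
next
  case (insert R \<F>)
  then obtain rs where rs: "\<Union>\<F> = (\<Union>(a, b)\<in>set rs. stone_hat a \<times> stone_hat b)"
    by blast
  obtain a b where "R = stone_hat a \<times> stone_hat b"
    using insert.prems by blast
  with rs show ?case
    by (intro exI[of _ "(a, b) # rs"]) simp
qed

text \<open>A clopen subset of the product of the Stone spaces is open, hence a union of rectangles
  of basic clopen sets, and closed in a compact space, hence covered by finitely many of them.\<close>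

lemma free_product_finite_union_rectangles:
  fixes W :: "(('a::boolean_algebra \<Rightarrow> bool) \<times> ('b::boolean_algebra \<Rightarrow> bool)) set"
  assumes "W \<in> free_product TYPE('a) TYPE('b)"
  obtains rs :: "('a \<times> 'b) list" where "W = (\<Union>(a, b)\<in>set rs. stone_hat a \<times> stone_hat b)"
proof -
  let ?X = "free_prod_topology TYPE('a) TYPE('b)"
  define \<U> where "\<U> = {R. \<exists>a b. R = stone_hat (a::'a) \<times> stone_hat (b::'b) \<and> R \<subseteq> W}"
  have "compactin ?X W"
    using assms compact_space_free_prod_topology unfolding free_product_def
    by (auto intro: closedin_compact_space)
  then have finite_subcover: "\<forall>\<V>. (\<forall>U\<in>\<V>. openin ?X U) \<and> W \<subseteq> \<Union>\<V> \<longrightarrow> (\<exists>\<F>. finite \<F> \<and> \<F> \<subseteq> \<V> \<and> W \<subseteq> \<Union>\<F>)"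
    unfolding compactin_def by (rule conjunct2)
  have "\<forall>U\<in>\<U>. openin ?X U"
    unfolding \<U>_def free_prod_topology_def by (auto simp: openin_prod_Times_iff openin_stone_hat)
  moreover have "W \<subseteq> \<Union>\<U>"
  proof
    fix p assume p: "p \<in> W"
    obtain x y where xy: "p = (x, y)" by (cases p)
    have "openin ?X W"
      using assms by (simp add: free_product_def)
    then obtain a b where "p \<in> stone_hat a \<times> stone_hat b" "stone_hat a \<times> stone_hat b \<subseteq> W"
      using openin_free_prod_topology_rectangle p xy by metis
    then show "p \<in> \<Union>\<U>"
      unfolding \<U>_def by blast
  qed
  ultimately have "\<exists>\<F>. finite \<F> \<and> \<F> \<subseteq> \<U> \<and> W \<subseteq> \<Union>\<F>"
    using finite_subcover by blast
  then obtain \<F> where \<F>: "finite \<F>" "\<F> \<subseteq> \<U>" "W \<subseteq> \<Union>\<F>"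
    by blast
  have "\<exists>a b. R = stone_hat a \<times> stone_hat b" if "R \<in> \<F>" for R
    using that \<F>(2) unfolding \<U>_def by blast
  then obtain rs where rs: "\<Union>\<F> = (\<Union>(a, b)\<in>set rs. stone_hat a \<times> stone_hat b)"
    using finite_union_stone_rectangles[OF \<F>(1)] by blast
  have "\<Union>\<F> \<subseteq> W"
    using \<F>(2) by (auto simp: \<U>_def)
  with \<F>(3) have "W = \<Union>\<F>"
    by (rule subset_antisym)
  then show ?thesis
    using that[of rs] rs by simp
qed

section \<open>Spaces of place functions\<close>

lemma cells_positive_disjoint:
  assumes "\<And>a. 0 \<le> \<mu> a" "\<And>a b. inf a b = bot \<Longrightarrow> inf (\<mu> a) (\<mu> b) = 0"
  shows "positive_disjoint_on (sign_vectors (length ss)) (\<lambda>bs. \<mu> (cell ss bs))"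
  unfolding positive_disjoint_on_def sign_vectors_def
  by (auto intro!: assms cell_disjoint)

locale caratheodory_space =
  fixes e :: "'e::riesz_space" and chi :: "'c::boolean_algebra \<Rightarrow> 'e"
  assumes strong_unit: "strong_unit e"
    and bool_iso: "bool_iso UNIV sup inf uminus bot top (components e) sup inf (\<lambda>x. e - x) 0 e chi"
    and span_components: "span (components e) = UNIV"
begin

lemma chi_inf: "chi (inf a b) = inf (chi a) (chi b)"
  using bool_iso by (simp add: bool_iso_def)

lemma chi_sup: "chi (sup a b) = sup (chi a) (chi b)"
  using bool_iso by (simp add: bool_iso_def)

lemma chi_bot [simp]: "chi bot = 0"
  using bool_iso by (simp add: bool_iso_def)

lemma chi_top [simp]: "chi top = e"
  using bool_iso by (simp add: bool_iso_def)

lemma range_chi: "range chi = components e"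
  using bool_iso by (simp add: bool_iso_def bij_betw_def)

lemma chi_nonneg: "0 \<le> chi a"
  using range_chi by (auto simp: components_def)

lemma chi_le_unit: "chi a \<le> e"
proof -
  have "inf (chi a) (e - chi a) = 0"
    using range_chi by (auto simp: components_def)
  then have "0 \<le> e - chi a" by (metis inf_le2)
  then show ?thesis by simp
qed

lemma inj_chi: "inj chi"
  using bool_iso by (simp add: bool_iso_def bij_betw_def)

lemma chi_eq_0_iff: "chi a = 0 \<longleftrightarrow> a = bot"
  using inj_chi chi_bot by (metis injD)

lemma span_range_chi: "span (range chi) = UNIV"
  using span_components range_chi by simp

lemma finitely_additive_chi: "finitely_additive chi"
  unfolding finitely_additive_def
proof (intro allI impI)
  fix x y :: 'c
  assume "inf x y = bot"
  then have "inf (chi x) (chi y) = 0"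
    by (simp flip: chi_inf)
  then show "chi (sup x y) = chi x + chi y"
    using add_eq_inf_sup[of "chi x" "chi y"] by (simp add: chi_sup)
qed

lemma le_scaleR_unit: obtains c where "0 \<le> c" "x \<le> c *\<^sub>R e"
proof -
  obtain c where "sup x (- x) \<le> c *\<^sub>R e"
    using strong_unit by (auto simp: strong_unit_def)
  then have "x \<le> c *\<^sub>R e"
    by (meson order_trans sup_ge1)
  also have "\<dots> \<le> max c 0 *\<^sub>R e"
    using chi_nonneg[of top] by (intro scaleR_right_mono) auto
  finally show ?thesis
    using that[of "max c 0"] by simp
qed

lemma linear_eq_on_chi:
  assumes "linear S" "linear T" "\<And>a. S (chi a) = T (chi a)"
  shows "S = T"
  using linear_eq_on[OF assms(1,2)] span_range_chi assms(3) by blast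

lemma extension_exists:
  assumes "finitely_additive \<mu>"
  shows "\<exists>S. linear S \<and> (\<forall>a. S (chi a) = \<mu> a)"
proof (rule linear_extension_by_expansions[OF span_range_chi])
  fix F :: "'c set"
  assume "finite F"
  then obtain ss where ss: "set ss = F"
    using finite_list by blast
  let ?C = "sign_vectors (length ss)"
  have "expansion_on F chi ?C (cell_coeff ss) (\<lambda>bs. chi (cell ss bs))"
    using finitely_additive_cell_expansion[OF finitely_additive_chi, of ss] ss by simp
  moreover have "expansion_on F \<mu> ?C (cell_coeff ss) (\<lambda>bs. \<mu> (cell ss bs))"
    using finitely_additive_cell_expansion[OF assms, of ss] ss by simp
  moreover have "positive_disjoint_on ?C (\<lambda>bs. chi (cell ss bs))"
    by (rule cells_positive_disjoint) (simp_all add: chi_nonneg flip: chi_inf)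
  moreover have "\<forall>k\<in>?C. chi (cell ss k) = 0 \<longrightarrow> \<mu> (cell ss k) = 0"
    by (simp add: chi_eq_0_iff finitely_additive_bot[OF assms])
  ultimately show "\<exists>(C::bool list set) M u v. expansion_on F chi C M u \<and> expansion_on F \<mu> C M v
      \<and> positive_disjoint_on C u \<and> (\<forall>k\<in>C. u k = 0 \<longrightarrow> v k = 0)"
    by blast
qed

definition extension :: "('c \<Rightarrow> 'w::real_vector) \<Rightarrow> 'e \<Rightarrow> 'w" where
  "extension \<mu> = (SOME S. linear S \<and> (\<forall>a. S (chi a) = \<mu> a))"

lemma
  assumes "finitely_additive \<mu>"
  shows linear_extension: "linear (extension \<mu>)"
    and extension_chi [simp]: "extension \<mu> (chi a) = \<mu> a"
  using someI_ex[OF extension_exists[OF assms]] unfolding extension_def by auto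

lemma extension_eqI:
  assumes "linear S" "\<And>a. S (chi a) = \<mu> a"
  shows "extension \<mu> = S"
proof -
  have "finitely_additive \<mu>"
    using finitely_additive_compose[OF finitely_additive_chi assms(1)] assms(2) by simp
  then show ?thesis
    using assms by (intro linear_eq_on_chi linear_extension) simp_all
qed

lemma riesz_homI_on_chi:
  assumes lin: "linear S" and nonneg: "\<And>a. 0 \<le> S (chi a)"
    and disjoint: "\<And>a b. inf a b = bot \<Longrightarrow> inf (S (chi a)) (S (chi b)) = 0"
  shows "riesz_hom S"
proof (rule riesz_homI_by_expansions[OF lin span_range_chi])
  fix F :: "'c set"
  assume "finite F"
  then obtain ss where ss: "set ss = F"
    using finite_list by blast
  let ?C = "sign_vectors (length ss)"
  have "expansion_on F chi ?C (cell_coeff ss) (\<lambda>bs. chi (cell ss bs))"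
    using finitely_additive_cell_expansion[OF finitely_additive_chi, of ss] ss by simp
  moreover have "positive_disjoint_on ?C (\<lambda>bs. chi (cell ss bs))"
    by (rule cells_positive_disjoint) (simp_all add: chi_nonneg flip: chi_inf)
  moreover have "positive_disjoint_on ?C (\<lambda>bs. S (chi (cell ss bs)))"
    by (rule cells_positive_disjoint) (simp_all add: nonneg disjoint)
  ultimately show "\<exists>(C::bool list set) M u. expansion_on F chi C M u
      \<and> positive_disjoint_on C u \<and> positive_disjoint_on C (\<lambda>k. S (u k))"
    by blast
qed

lemma riesz_hom_extension:
  assumes "finitely_additive \<mu>" "\<And>a. 0 \<le> \<mu> a" "\<And>a b. inf a b = bot \<Longrightarrow> inf (\<mu> a) (\<mu> b) = 0"
  shows "riesz_hom (extension \<mu>)"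
  using assms by (intro riesz_homI_on_chi linear_extension) simp_all

lemma inf_riesz_hom_eq_0_if_unit:
  assumes S: "riesz_hom S" and T: "riesz_hom T" and unit: "inf (S e) (T e) = 0" and x: "0 \<le> x"
  shows "inf (S x) (T x) = 0"
proof -
  obtain c where c: "0 \<le> c" "x \<le> c *\<^sub>R e"
    by (rule le_scaleR_unit)
  show ?thesis
    using riesz_hom_nonneg[OF S x] riesz_hom_le_scaleR[OF S c(2)]
      riesz_hom_nonneg[OF T x] riesz_hom_le_scaleR[OF T c(2)]
    by (rule inf_eq_0_le_scaleR[OF _ _ _ _ unit c(1)])
qed

lemma finitely_additive_extension:
  fixes R :: "'c \<Rightarrow> 'b::boolean_algebra \<Rightarrow> 'w::real_vector"
  assumes left: "\<And>b. finitely_additive (\<lambda>a. R a b)" and right: "\<And>a. finitely_additive (R a)"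
  shows "finitely_additive (\<lambda>b. extension (\<lambda>a. R a b) x)"
  unfolding finitely_additive_def
proof (intro allI impI)
  fix b b' :: 'b
  assume "inf b b' = bot"
  then have "R a (sup b b') = R a b + R a b'" for a
    using finitely_additiveD[OF right] by blast
  then have "extension (\<lambda>a. R a (sup b b')) = (\<lambda>x. extension (\<lambda>a. R a b) x + extension (\<lambda>a. R a b') x)"
    by (intro extension_eqI linear_compose_add linear_extension left) (simp add: left)
  then show "extension (\<lambda>a. R a (sup b b')) x = extension (\<lambda>a. R a b) x + extension (\<lambda>a. R a b') x"
    by simp
qed

lemma linear_extension_parametric:
  assumes additive: "\<And>x. finitely_additive (f x)" and linear: "\<And>a. linear (\<lambda>x. f x a)"
  shows "linear (\<lambda>x. extension (f x) y)"
proof (rule linearI)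
  fix x x'
  have "extension (f (x + x')) = (\<lambda>y. extension (f x) y + extension (f x') y)"
    by (intro extension_eqI linear_compose_add linear_extension additive)
      (simp add: additive linear_add[OF linear])
  then show "extension (f (x + x')) y = extension (f x) y + extension (f x') y" by simp
next
  fix c x
  have "extension (f (c *\<^sub>R x)) = (\<lambda>y. c *\<^sub>R extension (f x) y)"
    by (intro extension_eqI linear_compose_scale_right linear_extension additive)
      (simp add: additive linear_scale[OF linear])
  then show "extension (f (c *\<^sub>R x)) y = c *\<^sub>R extension (f x) y" by simp
qed

end

lemma caratheodory_space_of_type:
  fixes E :: "'e::archimedean_riesz_space itself" and A :: "'c::boolean_algebra itself"
  assumes "is_caratheodory_space_of_type E A"
  obtains e :: 'e and chi :: "'c \<Rightarrow> 'e" where "caratheodory_space e chi"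
  using assms unfolding is_caratheodory_space_def caratheodory_space_def by blast

section \<open>Riesz bimeasures\<close>

definition riesz_bimeasure :: "('a::boolean_algebra \<Rightarrow> 'b::boolean_algebra \<Rightarrow> 'v::riesz_space) \<Rightarrow> bool" where
  "riesz_bimeasure R \<longleftrightarrow> (\<forall>a b. 0 \<le> R a b)
     \<and> (\<forall>b. finitely_additive (\<lambda>a. R a b)) \<and> (\<forall>a. finitely_additive (R a))
     \<and> (\<forall>a a' b b'. inf a a' = bot \<or> inf b b' = bot \<longrightarrow> inf (R a b) (R a' b') = 0)"

lemma
  assumes "riesz_bimeasure R"
  shows riesz_bimeasure_nonneg: "0 \<le> R a b"
    and riesz_bimeasure_additive_left: "finitely_additive (\<lambda>a. R a b)"
    and riesz_bimeasure_additive_right: "finitely_additive (R a)"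
    and riesz_bimeasure_disjoint_left: "inf a a' = bot \<Longrightarrow> inf (R a b) (R a' b') = 0"
    and riesz_bimeasure_disjoint_right: "inf b b' = bot \<Longrightarrow> inf (R a b) (R a' b') = 0"
  using assms unfolding riesz_bimeasure_def by blast+

lemma riesz_bimeasure_bot [simp]:
  assumes "riesz_bimeasure R"
  shows "R bot b = 0" "R a bot = 0"
  using finitely_additive_bot[OF riesz_bimeasure_additive_left[OF assms]]
    finitely_additive_bot[OF riesz_bimeasure_additive_right[OF assms]] by auto

lemma riesz_bimeasure_cells_positive_disjoint:
  assumes "riesz_bimeasure R"
  shows "positive_disjoint_on (sign_vectors (length ss) \<times> sign_vectors (length ts))
           (\<lambda>k. R (cell ss (fst k)) (cell ts (snd k)))"
  unfolding positive_disjoint_on_def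
proof (intro conjI ballI impI)
  fix k k' assume k: "k \<in> sign_vectors (length ss) \<times> sign_vectors (length ts)"
    and k': "k' \<in> sign_vectors (length ss) \<times> sign_vectors (length ts)" and "k \<noteq> k'"
  then consider "fst k \<noteq> fst k'" | "snd k \<noteq> snd k'"
    by (metis prod_eqI)
  then show "inf (R (cell ss (fst k)) (cell ts (snd k))) (R (cell ss (fst k')) (cell ts (snd k'))) = 0"
  proof cases
    case 1
    then show ?thesis
      using k k' by (intro riesz_bimeasure_disjoint_left[OF assms] cell_disjoint) (auto simp: sign_vectors_def)
  next
    case 2
    then show ?thesis
      using k k' by (intro riesz_bimeasure_disjoint_right[OF assms] cell_disjoint) (auto simp: sign_vectors_def)
  qed
qed (rule riesz_bimeasure_nonneg[OF assms])

lemma finite_subset_set_times: "finite F \<Longrightarrow> \<exists>xs ys. F \<subseteq> set xs \<times> set ys"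
  using finite_list[of "fst ` F"] finite_list[of "snd ` F"] by force

lemma riesz_bimeasure_cell_expansion:
  assumes "riesz_bimeasure P" "F \<subseteq> set ss \<times> set ts"
  shows "expansion_on F (case_prod P) (sign_vectors (length ss) \<times> sign_vectors (length ts))
           (\<lambda>r k. cell_coeff ss (fst r) (fst k) * cell_coeff ts (snd r) (snd k))
           (\<lambda>k. P (cell ss (fst k)) (cell ts (snd k)))"
  using finitely_additive2_cell_expansion[of P ss ts] assms
    riesz_bimeasure_additive_left[OF assms(1)] riesz_bimeasure_additive_right[OF assms(1)]
  by (auto intro: expansion_on_subset)

text \<open>Both bimeasures are expanded over the products of the cells of finitely many a's and b's,
  and these products are disjoint on either side.\<close>

lemma riesz_hom_between_bimeasures:
  fixes R :: "'a::boolean_algebra \<Rightarrow> 'b::boolean_algebra \<Rightarrow> 'v::riesz_space"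
    and Q :: "'a \<Rightarrow> 'b \<Rightarrow> 'w::riesz_space"
  assumes R: "riesz_bimeasure R" and Q: "riesz_bimeasure Q"
    and span: "span (range (case_prod R)) = UNIV"
    and zero: "\<And>a b. R a b = 0 \<Longrightarrow> Q a b = 0"
  obtains S where "riesz_hom S" "\<And>a b. S (R a b) = Q a b"
proof -
  let ?C = "\<lambda>ss ts. sign_vectors (length ss) \<times> sign_vectors (length ts)"
  let ?M = "\<lambda>ss ts r k. cell_coeff ss (fst r) (fst k) * cell_coeff ts (snd r) (snd k)"
  let ?cells = "\<lambda>P ss ts k. P (cell ss (fst k)) (cell ts (snd k))"
  have "\<exists>S. linear S \<and> (\<forall>r. S (case_prod R r) = case_prod Q r)"
  proof (rule linear_extension_by_expansions[OF span])
    fix F :: "('a \<times> 'b) set"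
    assume "finite F"
    then obtain ss ts where F: "F \<subseteq> set ss \<times> set ts"
      using finite_subset_set_times by blast
    show "\<exists>(C::(bool list \<times> bool list) set) M u v.
        expansion_on F (case_prod R) C M u \<and> expansion_on F (case_prod Q) C M v
        \<and> positive_disjoint_on C u \<and> (\<forall>k\<in>C. u k = 0 \<longrightarrow> v k = 0)"
      using riesz_bimeasure_cell_expansion[OF R F] riesz_bimeasure_cell_expansion[OF Q F]
        riesz_bimeasure_cells_positive_disjoint[OF R, of ss ts] zero
      by (intro exI[of _ "?C ss ts"] exI[of _ "?M ss ts"] exI[of _ "?cells R ss ts"] exI[of _ "?cells Q ss ts"])
        simp
  qed
  then obtain S where lin: "linear S" and S: "\<And>r. S (case_prod R r) = case_prod Q r"
    by blast
  have S_rectangle: "S (R a b) = Q a b" for a b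
    using S[of "(a, b)"] by simp
  have "riesz_hom S"
  proof (rule riesz_homI_by_expansions[OF lin span])
    fix F :: "('a \<times> 'b) set"
    assume "finite F"
    then obtain ss ts where F: "F \<subseteq> set ss \<times> set ts"
      using finite_subset_set_times by blast
    have "(\<lambda>k. S (?cells R ss ts k)) = ?cells Q ss ts"
      by (simp add: fun_eq_iff S_rectangle)
    then show "\<exists>(C::(bool list \<times> bool list) set) M u. expansion_on F (case_prod R) C M u
        \<and> positive_disjoint_on C u \<and> positive_disjoint_on C (\<lambda>k. S (u k))"
      using riesz_bimeasure_cell_expansion[OF R F] riesz_bimeasure_cells_positive_disjoint[OF R, of ss ts]
        riesz_bimeasure_cells_positive_disjoint[OF Q, of ss ts]
      by (intro exI[of _ "?C ss ts"] exI[of _ "?M ss ts"] exI[of _ "?cells R ss ts"]) simp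
  qed
  with S_rectangle show ?thesis
    using that by blast
qed

lemma riesz_bimeasure_of_bimorphism:
  assumes A: "caratheodory_space eE cA" and B: "caratheodory_space eF cB"
    and \<psi>: "riesz_bimorphism \<psi>"
  shows "riesz_bimeasure (\<lambda>a b. \<psi> (cA a) (cB b))"
proof -
  interpret A: caratheodory_space eE cA by (fact A)
  interpret B: caratheodory_space eF cB by (fact B)
  have hom_right: "riesz_hom (\<psi> (cA a))" for a
    by (rule riesz_bimorphism_hom_right[OF \<psi> A.chi_nonneg])
  have hom_left: "riesz_hom (\<lambda>x. \<psi> x (cB b))" for b
    by (rule riesz_bimorphism_hom_left[OF \<psi> B.chi_nonneg])
  have disjoint_left: "inf (\<psi> (cA a) (cB b)) (\<psi> (cA a') (cB b')) = 0" if "inf a a' = bot" for a a' b b'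
  proof (rule inf_eq_0_le_scaleR[where c=1])
    have "inf (\<psi> (cA a) eF) (\<psi> (cA a') eF) = \<psi> (cA (inf a a')) eF"
      using riesz_hom_inf[OF hom_left[of top]] by (simp add: A.chi_inf)
    then show "inf (\<psi> (cA a) eF) (\<psi> (cA a') eF) = 0"
      using that linear_0[OF riesz_bimorphism_linear_left[OF \<psi>]] by simp
  qed (simp_all add: riesz_bimorphism_nonneg[OF \<psi> A.chi_nonneg B.chi_nonneg]
      riesz_hom_mono[OF hom_right B.chi_le_unit])
  have disjoint_right: "inf (\<psi> (cA a) (cB b)) (\<psi> (cA a') (cB b')) = 0" if "inf b b' = bot" for a a' b b'
  proof (rule inf_eq_0_le_scaleR[where c=1])
    have "inf (\<psi> eE (cB b)) (\<psi> eE (cB b')) = \<psi> eE (cB (inf b b'))"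
      using riesz_hom_inf[OF hom_right[of top]] by (simp add: B.chi_inf)
    then show "inf (\<psi> eE (cB b)) (\<psi> eE (cB b')) = 0"
      using that linear_0[OF riesz_bimorphism_linear_right[OF \<psi>]] by simp
  qed (simp_all add: riesz_bimorphism_nonneg[OF \<psi> A.chi_nonneg B.chi_nonneg]
      riesz_hom_mono[OF hom_left A.chi_le_unit])
  show ?thesis
    unfolding riesz_bimeasure_def
    using riesz_bimorphism_nonneg[OF \<psi> A.chi_nonneg B.chi_nonneg] disjoint_left disjoint_right
      finitely_additive_compose[OF A.finitely_additive_chi riesz_bimorphism_linear_left[OF \<psi>]]
      finitely_additive_compose[OF B.finitely_additive_chi riesz_bimorphism_linear_right[OF \<psi>]]
    by blast
qed

lemma (in caratheodory_space) riesz_bimeasure_extension: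
  assumes R: "riesz_bimeasure R"
  shows riesz_hom_extension_bimeasure: "riesz_hom (extension (\<lambda>a. R a b))"
    and extension_bimeasure_chi: "extension (\<lambda>a. R a b) (chi a) = R a b"
    and finitely_additive_extension_bimeasure: "finitely_additive (\<lambda>b. extension (\<lambda>a. R a b) x)"
    and inf_extension_bimeasure_eq_0:
      "0 \<le> x \<Longrightarrow> inf b b' = bot \<Longrightarrow> inf (extension (\<lambda>a. R a b) x) (extension (\<lambda>a. R a b') x) = 0"
proof -
  note additive = riesz_bimeasure_additive_left[OF R] riesz_bimeasure_additive_right[OF R]
  show hom: "riesz_hom (extension (\<lambda>a. R a b))" for b
    using R by (intro riesz_hom_extension riesz_bimeasure_additive_left riesz_bimeasure_nonneg
        riesz_bimeasure_disjoint_left)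
  show "extension (\<lambda>a. R a b) (chi a) = R a b"
    by (rule extension_chi[OF additive(1)])
  show "finitely_additive (\<lambda>b. extension (\<lambda>a. R a b) x)"
    by (rule finitely_additive_extension[OF additive])
  show "inf (extension (\<lambda>a. R a b) x) (extension (\<lambda>a. R a b') x) = 0"
    if "0 \<le> x" "inf b b' = bot"
    using riesz_bimeasure_disjoint_right[OF R that(2), of top top] extension_chi[OF additive(1), of _ top]
    by (intro inf_riesz_hom_eq_0_if_unit[OF hom hom _ that(1)]) simp
qed

text \<open>Extend first in the left variable for each fixed b, then in the right one.\<close>

lemma riesz_bimorphism_of_bimeasure:
  fixes cA :: "'a::boolean_algebra \<Rightarrow> 'e::riesz_space" and cB :: "'b::boolean_algebra \<Rightarrow> 'f::riesz_space"
    and R :: "'a \<Rightarrow> 'b \<Rightarrow> 'h::riesz_space"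
  assumes A: "caratheodory_space eE cA" and B: "caratheodory_space eF cB"
    and R: "riesz_bimeasure R"
  obtains \<phi> where "riesz_bimorphism \<phi>" "\<And>a b. \<phi> (cA a) (cB b) = R a b"
proof -
  interpret A: caratheodory_space eE cA by (fact A)
  interpret B: caratheodory_space eF cB by (fact B)
  define \<Phi> where "\<Phi> b = A.extension (\<lambda>a. R a b)" for b
  note \<Phi>_hom = A.riesz_hom_extension_bimeasure[OF R, folded \<Phi>_def]
    and \<Phi>_chi [simp] = A.extension_bimeasure_chi[OF R, folded \<Phi>_def]
    and \<Phi>_additive = A.finitely_additive_extension_bimeasure[OF R, folded \<Phi>_def]
  define \<phi> where "\<phi> x = B.extension (\<lambda>b. \<Phi> b x)" for x
  have \<phi>_chi [simp]: "\<phi> x (cB b) = \<Phi> b x" for x b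
    unfolding \<phi>_def by (rule B.extension_chi[OF \<Phi>_additive])
  have \<phi>_linear_right: "linear (\<phi> x)" for x
    unfolding \<phi>_def by (rule B.linear_extension[OF \<Phi>_additive])
  have \<phi>_linear_left: "linear (\<lambda>x. \<phi> x y)" for y
    unfolding \<phi>_def by (rule B.linear_extension_parametric[OF \<Phi>_additive riesz_hom_linear[OF \<Phi>_hom]])
  have \<phi>_hom_right: "riesz_hom (\<phi> x)" if "0 \<le> x" for x
    unfolding \<phi>_def
    using riesz_hom_nonneg[OF \<Phi>_hom that] A.inf_extension_bimeasure_eq_0[OF R that, folded \<Phi>_def]
    by (intro B.riesz_hom_extension[OF \<Phi>_additive])
  have \<phi>_hom_left: "riesz_hom (\<lambda>x. \<phi> x y)" if "0 \<le> y" for y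
  proof (rule A.riesz_homI_on_chi[OF \<phi>_linear_left])
    have hom: "riesz_hom (\<phi> (cA a))" for a
      by (rule \<phi>_hom_right[OF A.chi_nonneg])
    show "0 \<le> \<phi> (cA a) y" for a
      by (rule riesz_hom_nonneg[OF hom that])
    show "inf (\<phi> (cA a) y) (\<phi> (cA a') y) = 0" if "inf a a' = bot" for a a'
      using riesz_bimeasure_disjoint_left[OF R that, of top top] \<phi>_chi[of _ top]
      by (intro B.inf_riesz_hom_eq_0_if_unit[OF hom hom _ \<open>0 \<le> y\<close>]) simp
  qed
  have "riesz_bimorphism \<phi>"
    unfolding riesz_bimorphism_def
    using \<phi>_linear_left \<phi>_linear_right \<phi>_hom_left \<phi>_hom_right by blast
  then show ?thesis
    using that by simp
qed

lemma riesz_bimorphism_comp: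
  assumes T: "riesz_hom T" and \<psi>: "riesz_bimorphism \<psi>"
  shows "riesz_bimorphism (\<lambda>x y. T (\<psi> x y))"
proof -
  have "linear (\<lambda>y. T (\<psi> x y))" "linear (\<lambda>x. T (\<psi> x y))" for x y
    using linear_compose[OF riesz_bimorphism_linear_right[OF \<psi>] riesz_hom_linear[OF T]]
      linear_compose[OF riesz_bimorphism_linear_left[OF \<psi>] riesz_hom_linear[OF T]]
    by (simp_all add: o_def)
  moreover have "riesz_hom (\<lambda>y. T (\<psi> x y))" if "0 \<le> x" for x
    using riesz_hom_comp[OF T riesz_bimorphism_hom_right[OF \<psi> that]] by (simp add: o_def)
  moreover have "riesz_hom (\<lambda>x. T (\<psi> x y))" if "0 \<le> y" for y
    using riesz_hom_comp[OF T riesz_bimorphism_hom_left[OF \<psi> that]] by (simp add: o_def)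
  ultimately show ?thesis
    unfolding riesz_bimorphism_def by blast
qed

lemma riesz_bimorphism_eq_on_chi:
  assumes A: "caratheodory_space eE cA" and B: "caratheodory_space eF cB"
    and \<phi>: "riesz_bimorphism \<phi>" and \<psi>: "riesz_bimorphism \<psi>"
    and eq: "\<And>a b. \<phi> (cA a) (cB b) = \<psi> (cA a) (cB b)"
  shows "\<phi> = \<psi>"
proof -
  have "\<phi> (cA a) = \<psi> (cA a)" for a
    using eq by (intro caratheodory_space.linear_eq_on_chi[OF B] riesz_bimorphism_linear_right \<phi> \<psi>)
  then have "(\<lambda>x. \<phi> x y) = (\<lambda>x. \<psi> x y)" for y
    by (intro caratheodory_space.linear_eq_on_chi[OF A] riesz_bimorphism_linear_left \<phi> \<psi>) simp
  then show ?thesis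
    by (metis ext)
qed

section \<open>Place functions on the free product\<close>

locale caratheodory_free_product =
  fixes e :: "'h::riesz_space"
    and chi :: "(('a::boolean_algebra \<Rightarrow> bool) \<times> ('b::boolean_algebra \<Rightarrow> bool)) set \<Rightarrow> 'h"
  assumes bool_iso: "bool_iso (free_product TYPE('a) TYPE('b)) (\<union>) (\<inter>)
       (\<lambda>S. topspace (free_prod_topology TYPE('a) TYPE('b)) - S) {} (topspace (free_prod_topology TYPE('a) TYPE('b)))
       (components e) sup inf (\<lambda>x. e - x) 0 e chi"
    and span_components: "span (components e) = UNIV"
begin

abbreviation free_product_ab where "free_product_ab \<equiv> free_product TYPE('a) TYPE('b)"

definition rectangle :: "'a \<Rightarrow> 'b \<Rightarrow> 'h" where
  "rectangle a b = chi (stone_hat a \<times> stone_hat b)"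

lemma chi_Un: "W \<in> free_product_ab \<Longrightarrow> W' \<in> free_product_ab \<Longrightarrow> chi (W \<union> W') = sup (chi W) (chi W')"
  using bool_iso by (simp add: bool_iso_def)

lemma chi_Int: "W \<in> free_product_ab \<Longrightarrow> W' \<in> free_product_ab \<Longrightarrow> chi (W \<inter> W') = inf (chi W) (chi W')"
  using bool_iso by (simp add: bool_iso_def)

lemma chi_empty [simp]: "chi {} = 0"
  using bool_iso by (simp add: bool_iso_def)

lemma chi_image: "chi ` free_product_ab = components e"
  using bool_iso by (simp add: bool_iso_def bij_betw_def)

lemma chi_inj: "W \<in> free_product_ab \<Longrightarrow> W' \<in> free_product_ab \<Longrightarrow> chi W = chi W' \<Longrightarrow> W = W'"
  using bool_iso by (auto simp: bool_iso_def bij_betw_def inj_on_def)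

lemma empty_in_free_product: "{} \<in> free_product_ab"
  using union_rectangles_in_free_product[of "[]"] by simp

lemma chi_Un_Int:
  "W \<in> free_product_ab \<Longrightarrow> W' \<in> free_product_ab \<Longrightarrow> chi (W \<union> W') + chi (W \<inter> W') = chi W + chi W'"
  using add_eq_inf_sup[of "chi W" "chi W'"] by (simp add: chi_Un chi_Int)

lemma chi_disjoint_Un:
  assumes "W \<in> free_product_ab" "W' \<in> free_product_ab" "W \<inter> W' = {}"
  shows "chi (W \<union> W') = chi W + chi W'"
  using chi_Un_Int[OF assms(1,2)] assms(3) by simp

lemma rectangle_eq_0: "rectangle a b = 0 \<Longrightarrow> a = bot \<or> b = bot"
  using chi_inj[OF stone_rectangle_in_free_product empty_in_free_product, of a b]
  by (auto simp: rectangle_def stone_hat_eq_empty_iff)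

lemma riesz_bimeasure_rectangle: "riesz_bimeasure rectangle"
proof -
  have nonneg: "0 \<le> rectangle a b" for a b
    using chi_image stone_rectangle_in_free_product[of a b] by (auto simp: rectangle_def components_def)
  have inf: "inf (rectangle a b) (rectangle a' b') = rectangle (inf a a') (inf b b')" for a a' b b'
    unfolding rectangle_def
    by (simp add: chi_Int[OF stone_rectangle_in_free_product stone_rectangle_in_free_product, symmetric]
        stone_rectangle_Int)
  have "finitely_additive (\<lambda>a. rectangle a b)" for b
    unfolding finitely_additive_def rectangle_def
  proof (intro allI impI)
    fix x y :: 'a
    assume "inf x y = bot"
    moreover have "stone_hat (sup x y) \<times> stone_hat b = (stone_hat x \<times> stone_hat b) \<union> (stone_hat y \<times> stone_hat b)"
      by (auto simp: stone_hat_sup)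
    ultimately show "chi (stone_hat (sup x y) \<times> stone_hat b) = chi (stone_hat x \<times> stone_hat b) + chi (stone_hat y \<times> stone_hat b)"
      by (simp add: chi_disjoint_Un stone_rectangle_in_free_product stone_rectangle_Int)
  qed
  moreover have "finitely_additive (rectangle a)" for a
    unfolding finitely_additive_def rectangle_def
  proof (intro allI impI)
    fix x y :: 'b
    assume "inf x y = bot"
    moreover have "stone_hat a \<times> stone_hat (sup x y) = (stone_hat a \<times> stone_hat x) \<union> (stone_hat a \<times> stone_hat y)"
      by (auto simp: stone_hat_sup)
    ultimately show "chi (stone_hat a \<times> stone_hat (sup x y)) = chi (stone_hat a \<times> stone_hat x) + chi (stone_hat a \<times> stone_hat y)"
      by (simp add: chi_disjoint_Un stone_rectangle_in_free_product stone_rectangle_Int)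
  qed
  moreover have "inf (rectangle a b) (rectangle a' b') = 0" if "inf a a' = bot \<or> inf b b' = bot" for a a' b b'
    unfolding inf using that by (auto simp: rectangle_def)
  ultimately show ?thesis
    unfolding riesz_bimeasure_def using nonneg by blast
qed

lemma chi_union_rectangles_in_span:
  "chi (\<Union>(a, b)\<in>set rs. stone_hat a \<times> stone_hat b) \<in> span (range (case_prod rectangle))"
proof (induction "length rs" arbitrary: rs rule: less_induct)
  case less
  show ?case
  proof (cases rs)
    case Nil
    then show ?thesis by (simp add: span_zero)
  next
    case (Cons r rs')
    obtain a b where r: "r = (a, b)" by (cases r)
    let ?R = "stone_hat a \<times> stone_hat b"
    let ?U = "\<Union>(a, b)\<in>set rs'. stone_hat a \<times> stone_hat b"
    define rs'' where "rs'' = map (\<lambda>(a', b'). (inf a a', inf b b')) rs'"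
    have "?R \<inter> ?U = (\<Union>(a, b)\<in>set rs''. stone_hat a \<times> stone_hat b)"
      unfolding rs''_def by (auto simp: stone_hat_inf)
    then have "chi (?R \<inter> ?U) \<in> span (range (case_prod rectangle))"
      using less[of rs''] Cons by (simp add: rs''_def)
    moreover have "chi ?R \<in> span (range (case_prod rectangle))"
      by (rule span_base, rule range_eqI[of _ _ "(a, b)"]) (simp add: rectangle_def)
    moreover have "chi ?U \<in> span (range (case_prod rectangle))"
      using less[of rs'] Cons by simp
    moreover have "chi (?R \<union> ?U) = chi ?R + chi ?U - chi (?R \<inter> ?U)"
      using chi_Un_Int[OF stone_rectangle_in_free_product union_rectangles_in_free_product[of rs']]
      by (simp add: algebra_simps)
    ultimately have "chi (?R \<union> ?U) \<in> span (range (case_prod rectangle))"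
      by (simp add: span_add span_diff)
    then show ?thesis
      using Cons r by simp
  qed
qed

lemma span_range_rectangle: "span (range (case_prod rectangle)) = UNIV"
proof -
  have "components e \<subseteq> span (range (case_prod rectangle))"
  proof
    fix x assume "x \<in> components e"
    then obtain W where W: "W \<in> free_product_ab" "x = chi W"
      using chi_image by blast
    obtain rs where "W = (\<Union>(a, b)\<in>set rs. stone_hat a \<times> stone_hat b)"
      using free_product_finite_union_rectangles[OF W(1)] by blast
    then show "x \<in> span (range (case_prod rectangle))"
      using W chi_union_rectangles_in_span by simp
  qed
  then have "span (components e) \<subseteq> span (range (case_prod rectangle))"
    by (metis span_mono span_span)
  then show ?thesis
    using span_components by auto
qed

end

lemma caratheodory_free_product_exists:
  assumes "is_caratheodory_space_of_free_product
    TYPE('h::archimedean_riesz_space) TYPE('a::boolean_algebra) TYPE('b::boolean_algebra)"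
  obtains e :: "'h::archimedean_riesz_space"
    and chi :: "(('a::boolean_algebra \<Rightarrow> bool) \<times> ('b::boolean_algebra \<Rightarrow> bool)) set \<Rightarrow> 'h"
  where "caratheodory_free_product e chi"
  using assms
  unfolding is_caratheodory_space_of_free_product_def is_caratheodory_space_def caratheodory_free_product_def
  by blast

section \<open>The Fremlin tensor product\<close>

lemma fremlin_universal_hom_eq_id:
  fixes tp :: "'e::archimedean_riesz_space \<Rightarrow> 'f::archimedean_riesz_space \<Rightarrow> 'g::archimedean_riesz_space"
  assumes "fremlin_universal TYPE('g) tp" "riesz_bimorphism tp"
    and "riesz_hom U" "\<And>x y. U (tp x y) = tp x y"
  shows "U = id"
proof -
  have "\<exists>!T :: 'g \<Rightarrow> 'g. riesz_hom T \<and> (\<forall>x y. T (tp x y) = tp x y)"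
    using assms(1) assms(2) unfolding fremlin_universal_def by (elim allE[of _ tp] impE)
  then obtain T where unique: "\<And>T'. riesz_hom T' \<and> (\<forall>x y. T' (tp x y) = tp x y) \<Longrightarrow> T' = T"
    by (elim ex1E) blast
  have "U = T"
    using assms(3,4) by (intro unique) simp
  moreover have "id = T"
    by (intro unique) (simp add: riesz_hom_id)
  ultimately show ?thesis
    by simp
qed

lemma fremlin_universal_factor:
  fixes tp :: "'e::archimedean_riesz_space \<Rightarrow> 'f::archimedean_riesz_space \<Rightarrow> 'g::archimedean_riesz_space"
    and \<phi> :: "'e \<Rightarrow> 'f \<Rightarrow> 'h::archimedean_riesz_space"
  assumes "fremlin_universal TYPE('h) tp" "riesz_bimorphism \<phi>"
  obtains T where "riesz_hom T" "\<And>x y. T (tp x y) = \<phi> x y"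
proof -
  have "\<exists>!T :: 'g \<Rightarrow> 'h. riesz_hom T \<and> (\<forall>x y. T (tp x y) = \<phi> x y)"
    using assms unfolding fremlin_universal_def by (elim allE[of _ \<phi>] impE)
  then show ?thesis
    using that by (metis ex1_implies_ex)
qed

lemma linear_eq_id_on_span:
  assumes "linear f" "span B = UNIV" "\<And>b. b \<in> B \<Longrightarrow> f b = b"
  shows "f = id"
proof
  fix x
  show "f x = id x"
    using linear_eq_on[OF assms(1) linear_id, of x B] assms(2,3) by simp
qed

lemma riesz_hom_tensor_to_free_product:
  fixes tp :: "'e::archimedean_riesz_space \<Rightarrow> 'f::archimedean_riesz_space \<Rightarrow> 'g::archimedean_riesz_space"
    and cA :: "'a::boolean_algebra \<Rightarrow> 'e" and cB :: "'b::boolean_algebra \<Rightarrow> 'f"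
    and cH :: "(('a \<Rightarrow> bool) \<times> ('b \<Rightarrow> bool)) set \<Rightarrow> 'h::archimedean_riesz_space"
  assumes A: "caratheodory_space eE cA" and B: "caratheodory_space eF cB"
    and H: "caratheodory_free_product eH cH" and universal: "fremlin_universal TYPE('h) tp"
  obtains T where "riesz_hom T" "\<And>a b. T (tp (cA a) (cB b)) = caratheodory_free_product.rectangle cH a b"
proof -
  obtain \<phi> :: "'e \<Rightarrow> 'f \<Rightarrow> 'h" where \<phi>: "riesz_bimorphism \<phi>"
    "\<And>a b. \<phi> (cA a) (cB b) = caratheodory_free_product.rectangle cH a b"
    using riesz_bimorphism_of_bimeasure[OF A B caratheodory_free_product.riesz_bimeasure_rectangle[OF H]]
    by blast
  obtain T :: "'g \<Rightarrow> 'h" where "riesz_hom T" "\<And>x y. T (tp x y) = \<phi> x y"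
    using fremlin_universal_factor[OF universal \<phi>(1)] by blast
  then show ?thesis
    using that \<phi>(2) by simp
qed

lemma riesz_hom_free_product_to_tensor:
  fixes tp :: "'e::riesz_space \<Rightarrow> 'f::riesz_space \<Rightarrow> 'g::riesz_space"
  assumes A: "caratheodory_space eE cA" and B: "caratheodory_space eF cB"
    and H: "caratheodory_free_product eH cH" and tp: "riesz_bimorphism tp"
  obtains S where "riesz_hom S" "\<And>a b. S (caratheodory_free_product.rectangle cH a b) = tp (cA a) (cB b)"
proof -
  note Q = riesz_bimeasure_of_bimorphism[OF A B tp]
  have "tp (cA a) (cB b) = 0" if "caratheodory_free_product.rectangle cH a b = 0" for a b
    using caratheodory_free_product.rectangle_eq_0[OF H that] riesz_bimeasure_bot[OF Q] by auto
  then show ?thesis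
    using riesz_hom_between_bimeasures[OF caratheodory_free_product.riesz_bimeasure_rectangle[OF H] Q
        caratheodory_free_product.span_range_rectangle[OF H]] that
    by blast
qed

theorem theorem2p1:
  fixes tp :: "'e::archimedean_riesz_space \<Rightarrow> 'f::archimedean_riesz_space \<Rightarrow> 'g::archimedean_riesz_space"
  assumes "is_caratheodory_space_of_type TYPE('e) TYPE('a::boolean_algebra)"
    and "is_caratheodory_space_of_type TYPE('f) TYPE('b::boolean_algebra)"
    and "riesz_bimorphism tp"
    and "fremlin_universal TYPE('g) tp"
    and "fremlin_universal TYPE('h::archimedean_riesz_space) tp"
    and "is_caratheodory_space_of_free_product TYPE('h) TYPE('a) TYPE('b)"
  shows "\<exists>T :: 'g \<Rightarrow> 'h. riesz_iso T"
proof -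
  obtain eE and cA :: "'a \<Rightarrow> 'e" where A: "caratheodory_space eE cA"
    using caratheodory_space_of_type[OF assms(1)] .
  obtain eF and cB :: "'b \<Rightarrow> 'f" where B: "caratheodory_space eF cB"
    using caratheodory_space_of_type[OF assms(2)] .
  obtain eH :: 'h and cH :: "(('a \<Rightarrow> bool) \<times> ('b \<Rightarrow> bool)) set \<Rightarrow> 'h"
    where H: "caratheodory_free_product eH cH"
    using caratheodory_free_product_exists[OF assms(6)] .
  let ?R = "caratheodory_free_product.rectangle cH"
  obtain T :: "'g \<Rightarrow> 'h" where T: "riesz_hom T" "\<And>a b. T (tp (cA a) (cB b)) = ?R a b"
    using riesz_hom_tensor_to_free_product[OF A B H assms(5)] by blast
  obtain S :: "'h \<Rightarrow> 'g" where S: "riesz_hom S" "\<And>a b. S (?R a b) = tp (cA a) (cB b)"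
    using riesz_hom_free_product_to_tensor[OF A B H assms(3)] by blast
  have "(\<lambda>x y. S (T (tp x y))) = tp"
    using riesz_bimorphism_comp[OF riesz_hom_comp[OF S(1) T(1)] assms(3)]
    by (intro riesz_bimorphism_eq_on_chi[OF A B _ assms(3)]) (simp_all add: o_def S(2) T(2))
  then have "S \<circ> T = id"
    by (intro fremlin_universal_hom_eq_id[OF assms(4,3) riesz_hom_comp[OF S(1) T(1)]]) (simp add: fun_eq_iff)
  moreover have "T \<circ> S = id"
    using linear_compose[OF riesz_hom_linear[OF S(1)] riesz_hom_linear[OF T(1)]]
      caratheodory_free_product.span_range_rectangle[OF H]
    by (rule linear_eq_id_on_span) (auto simp: S(2) T(2))
  ultimately show ?thesis
    using o_bij T(1) by (auto simp: riesz_iso_def)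
qed

end
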